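(* Let $\mathcal M$ be a unichain, indexable MDP whose Whittle indices $(\lambda_s)_{s\in\mathcal S}$ are pairwise distinct. Then there exists $\delta>0$ such that every MDP $\widehat{\mathcal M}=(\mathcal S,\{0,1\},(\hat P^a)_a,(r^a)_a)$ which has the same rewards as $\mathcal M$, has the same support as $\mathcal M$, and satisfies $\|\mathcal M-\widehat{\mathcal M}\|_\infty\le\delta$, is indexable. In other words, $\mathcal M$ is an interior point (within MDPs with the same support and rewards) of the set of indexable MDPs.
   Context: Setting. An MDP is $\mathcal M=(\mathcal S,\{0,1\},(P^a)_{a\in\{0,1\}},(r^a)_{a\in\{0,1\}})$, with finite state space $\mathcal S$, row-stochastic matrices $P^0,P^1\in\mathbb R^{\mathcal S\times\mathcal S}$, and reward vectors $r^0,r^1\in\mathbb R^{\mathcal S}$. A policy is identified with the subset $\pi\subseteq\mathcal S$ of states where action $1$ is played; it induces $P^\pi$ (row $s$ equal to $P^1_{s,\cdot}$ if $s\in\pi$ and $P^0_{s,\cdot}$ otherwise) and $r^\pi$ similarly. $\mathcal M$ is unichain if $P^\pi$ has a single recurrent class for every policy $\pi$. For $\lambda\in\mathbb R$, the penalized MDP $\mathcal M(\lambda)$ has the same transitions and rewards $r^1-\lambda\mathbf 1$ (action 1) and $r^0$ (action 0). For a unichain policy $\pi$ in $\mathcal M(\lambda)$, the gain $g^\pi(\lambda)\in\mathbb R$ and bias $b^\pi(\lambda)\in\mathbb R^{\mathcal S}$ (defined up to an additive constant) solve $g^\pi\mathbf 1+b^\pi=r^\pi+P^\pi b^\pi$.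 The activation advantage of $s$ under $\pi$ is $\alpha^\pi_s(\lambda)=r^1_s-\lambda-r^0_s+(P^1_{s,\cdot}-P^0_{s,\cdot})\cdot b^\pi(\lambda)$. A policy is BO (bias optimal) in $\mathcal M(\lambda)$ if it is gain optimal and has maximal bias among gain-optimal policies; for unichain MDPs, $\pi$ is BO in $\mathcal M(\lambda)$ iff $\alpha^\pi_s(\lambda)\ge 0$ for all $s\in\pi$ and $\alpha^\pi_s(\lambda)\le0$ for all $s\notin\pi$. The optimal activation advantage is $\alpha^*_s(\lambda):=\alpha^\pi_s(\lambda)$ for any BO policy $\pi$ of $\mathcal M(\lambda)$ (this does not depend on the choice). $\mathcal M$ is indexable if for every $s\in\mathcal S$ there is $\lambda_s\in\mathbb R$ (the Whittle index of $s$) with $\alpha^*_s(\lambda)>0$ for $\lambda<\lambda_s$ and $\alpha^*_s(\lambda)<0$ for $\lambda>\lambda_s$. Hats denote the same objects computed in $\widehat{\mathcal M}$. For matrices, $\|A\|_\infty=\max_s\sum_{s'}|A_{s,s'}|$; for two MDPs with the same rewards, $\|\mathcal M-\widehat{\mathcal M}\|_\infty:=\max_{a\in\{0,1\}}\|P^a-\hat P^a\|_\infty$. $\mathcal M$ and $\widehat{\mathcal M}$ have the same support if for all $a,s,s'$: $P^a_{s,s'}>0\iff\hat P^a_{s,s'}>0$. *)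

theory Defs
  imports Complex_Main
begin

text \<open>Actions are encoded as booleans: True = action 1 (activate), False = action 0.
  A (two-action) MDP on the finite state type 's is given by transition kernels
  P :: bool => 's => 's => real and rewards r :: bool => 's => real.
  A policy is the set of states where action 1 is played.\<close>

definition is_mdp :: "(bool \<Rightarrow> 's::finite \<Rightarrow> 's \<Rightarrow> real) \<Rightarrow> bool" where
  "is_mdp P \<longleftrightarrow> (\<forall>a s. (\<forall>s'. 0 \<le> P a s s') \<and> (\<Sum>s'\<in>UNIV. P a s s') = 1)"

definition pol_trans :: "(bool \<Rightarrow> 's \<Rightarrow> 's \<Rightarrow> real) \<Rightarrow> 's set \<Rightarrow> 's \<Rightarrow> 's \<Rightarrow> real" where
  "pol_trans P \<pi> s = P (s \<in> \<pi>) s"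

definition pol_rew :: "(bool \<Rightarrow> 's \<Rightarrow> real) \<Rightarrow> real \<Rightarrow> 's set \<Rightarrow> 's \<Rightarrow> real" where
  "pol_rew r l \<pi> s = (if s \<in> \<pi> then r True s - l else r False s)"

definition reach :: "('s \<Rightarrow> 's \<Rightarrow> real) \<Rightarrow> ('s \<times> 's) set" where
  "reach Q = {(s, t). 0 < Q s t}\<^sup>*"

definition recurrent :: "('s \<Rightarrow> 's \<Rightarrow> real) \<Rightarrow> 's \<Rightarrow> bool" where
  "recurrent Q s \<longleftrightarrow> (\<forall>t. (s, t) \<in> reach Q \<longrightarrow> (t, s) \<in> reach Q)"

definition single_recurrent_class :: "('s \<Rightarrow> 's \<Rightarrow> real) \<Rightarrow> bool" where
  "single_recurrent_class Q \<longleftrightarrow>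
     (\<exists>s. recurrent Q s) \<and> (\<forall>s t. recurrent Q s \<and> recurrent Q t \<longrightarrow> (s, t) \<in> reach Q)"

definition unichain :: "(bool \<Rightarrow> 's \<Rightarrow> 's \<Rightarrow> real) \<Rightarrow> bool" where
  "unichain P \<longleftrightarrow> (\<forall>\<pi>. single_recurrent_class (pol_trans P \<pi>))"

definition poisson :: "('s::finite \<Rightarrow> 's \<Rightarrow> real) \<Rightarrow> ('s \<Rightarrow> real) \<Rightarrow> real \<Rightarrow> ('s \<Rightarrow> real) \<Rightarrow> bool" where
  "poisson Q rr g b \<longleftrightarrow> (\<forall>s. g + b s = rr s + (\<Sum>s'\<in>UNIV. Q s s' * b s'))"

definition stationary :: "('s::finite \<Rightarrow> 's \<Rightarrow> real) \<Rightarrow> ('s \<Rightarrow> real) \<Rightarrow> bool" where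
  "stationary Q \<mu> \<longleftrightarrow> (\<forall>s. 0 \<le> \<mu> s) \<and> (\<Sum>s\<in>UNIV. \<mu> s) = 1 \<and>
     (\<forall>s'. (\<Sum>s\<in>UNIV. \<mu> s * Q s s') = \<mu> s')"

text \<open>Gain of policy pi in M(lambda) (unique for unichain policies).\<close>
definition gain :: "(bool \<Rightarrow> 's::finite \<Rightarrow> 's \<Rightarrow> real) \<Rightarrow> (bool \<Rightarrow> 's \<Rightarrow> real) \<Rightarrow> real \<Rightarrow> 's set \<Rightarrow> real" where
  "gain P r l \<pi> = (THE g. \<exists>b. poisson (pol_trans P \<pi>) (pol_rew r l \<pi>) g b)"

text \<open>Bias of policy pi in M(lambda), normalized as the standard (Cesaro) bias:
  it solves the Poisson equation and has zero mean under the stationary distribution.\<close>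
definition bias :: "(bool \<Rightarrow> 's::finite \<Rightarrow> 's \<Rightarrow> real) \<Rightarrow> (bool \<Rightarrow> 's \<Rightarrow> real) \<Rightarrow> real \<Rightarrow> 's set \<Rightarrow> 's \<Rightarrow> real" where
  "bias P r l \<pi> = (THE b. poisson (pol_trans P \<pi>) (pol_rew r l \<pi>) (gain P r l \<pi>) b \<and>
      (\<forall>\<mu>. stationary (pol_trans P \<pi>) \<mu> \<longrightarrow> (\<Sum>s\<in>UNIV. \<mu> s * b s) = 0))"

definition adv :: "(bool \<Rightarrow> 's::finite \<Rightarrow> 's \<Rightarrow> real) \<Rightarrow> (bool \<Rightarrow> 's \<Rightarrow> real) \<Rightarrow> real \<Rightarrow> 's set \<Rightarrow> 's \<Rightarrow> real" where
  "adv P r l \<pi> s = r True s - l - r False s +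
      (\<Sum>s'\<in>UNIV. (P True s s' - P False s s') * bias P r l \<pi> s')"

definition gain_optimal :: "(bool \<Rightarrow> 's::finite \<Rightarrow> 's \<Rightarrow> real) \<Rightarrow> (bool \<Rightarrow> 's \<Rightarrow> real) \<Rightarrow> real \<Rightarrow> 's set \<Rightarrow> bool" where
  "gain_optimal P r l \<pi> \<longleftrightarrow> (\<forall>\<pi>'. gain P r l \<pi>' \<le> gain P r l \<pi>)"

definition bias_optimal :: "(bool \<Rightarrow> 's::finite \<Rightarrow> 's \<Rightarrow> real) \<Rightarrow> (bool \<Rightarrow> 's \<Rightarrow> real) \<Rightarrow> real \<Rightarrow> 's set \<Rightarrow> bool" where
  "bias_optimal P r l \<pi> \<longleftrightarrow> gain_optimal P r l \<pi> \<and>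
     (\<forall>\<pi>'. gain_optimal P r l \<pi>' \<longrightarrow> (\<forall>s. bias P r l \<pi>' s \<le> bias P r l \<pi> s))"

definition opt_adv :: "(bool \<Rightarrow> 's::finite \<Rightarrow> 's \<Rightarrow> real) \<Rightarrow> (bool \<Rightarrow> 's \<Rightarrow> real) \<Rightarrow> real \<Rightarrow> 's \<Rightarrow> real" where
  "opt_adv P r l s = adv P r l (SOME \<pi>. bias_optimal P r l \<pi>) s"

definition is_whittle_index :: "(bool \<Rightarrow> 's::finite \<Rightarrow> 's \<Rightarrow> real) \<Rightarrow> (bool \<Rightarrow> 's \<Rightarrow> real) \<Rightarrow> 's \<Rightarrow> real \<Rightarrow> bool" where
  "is_whittle_index P r s ls \<longleftrightarrow>
     (\<forall>l. l < ls \<longrightarrow> 0 < opt_adv P r l s) \<and> (\<forall>l. ls < l \<longrightarrow> opt_adv P r l s < 0)"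

definition indexable :: "(bool \<Rightarrow> 's::finite \<Rightarrow> 's \<Rightarrow> real) \<Rightarrow> (bool \<Rightarrow> 's \<Rightarrow> real) \<Rightarrow> bool" where
  "indexable P r \<longleftrightarrow> (\<forall>s. \<exists>ls. is_whittle_index P r s ls)"

definition whittle :: "(bool \<Rightarrow> 's::finite \<Rightarrow> 's \<Rightarrow> real) \<Rightarrow> (bool \<Rightarrow> 's \<Rightarrow> real) \<Rightarrow> 's \<Rightarrow> real" where
  "whittle P r s = (THE ls. is_whittle_index P r s ls)"

definition same_support :: "(bool \<Rightarrow> 's \<Rightarrow> 's \<Rightarrow> real) \<Rightarrow> (bool \<Rightarrow> 's \<Rightarrow> 's \<Rightarrow> real) \<Rightarrow> bool" where
  "same_support P Q \<longleftrightarrow> (\<forall>a s s'. 0 < P a s s' \<longleftrightarrow> 0 < Q a s s')"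

definition mdp_dist :: "(bool \<Rightarrow> 's::finite \<Rightarrow> 's \<Rightarrow> real) \<Rightarrow> (bool \<Rightarrow> 's \<Rightarrow> 's \<Rightarrow> real) \<Rightarrow> real" where
  "mdp_dist P Q = Max {(\<Sum>s'\<in>UNIV. \<bar>P a s s' - Q a s s'\<bar>) | a s. True}"

end

(*
  The advantage of a state under a fixed policy is affine in the penalty lambda and, among MDPs
  with the same support (which all remain unichain), continuous in the transition kernels: the
  bias solves a Poisson equation whose normalised solution moves by O(epsilon) when the kernel
  moves by epsilon.

  For the given MDP with distinct Whittle indices, the policy activating the states whose index is
  at least that of u is optimal at penalty lambda_u, with u indifferent and every other state
  strictly preferring its action, and the advantage of u under it strictly decreases in lambda.
  These are finitely many strict inequalities, so they persist for nearby MDPs once lambda_u is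
  replaced by the penalty at which u becomes indifferent. Such threshold conditions force
  indexability: between two consecutive thresholds the optimal policy is fixed, and the signs of
  its affine advantages follow from their signs at the two endpoints.
*)
theory Submission
  imports Defs "HOL-Analysis.Analysis"
begin

section \<open>Markov chains and the Poisson equation\<close>

definition stochastic :: "('s::finite \<Rightarrow> 's \<Rightarrow> real) \<Rightarrow> bool" where
  "stochastic Q \<longleftrightarrow> (\<forall>s t. 0 \<le> Q s t) \<and> (\<forall>s. (\<Sum>t\<in>UNIV. Q s t) = 1)"

lemma stochastic_pol_trans: "is_mdp P \<Longrightarrow> stochastic (pol_trans P \<pi>)"
  unfolding is_mdp_def stochastic_def pol_trans_def by auto

lemma stochastic_sum_const: "stochastic Q \<Longrightarrow> (\<Sum>t\<in>UNIV. Q s t * c) = c"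
  unfolding stochastic_def by (simp add: sum_distrib_right[symmetric])

lemma reach_refl: "(s, s) \<in> reach Q"
  unfolding reach_def by simp

lemma reach_trans: "(s, t) \<in> reach Q \<Longrightarrow> (t, u) \<in> reach Q \<Longrightarrow> (s, u) \<in> reach Q"
  unfolding reach_def by simp

lemma reach_step: "0 < Q s t \<Longrightarrow> (s, t) \<in> reach Q"
  unfolding reach_def by auto

lemma reach_closed:
  assumes "\<And>s t. s \<in> M \<Longrightarrow> 0 < Q s t \<Longrightarrow> t \<in> M" and "(s, t) \<in> reach Q" and "s \<in> M"
  shows "t \<in> M"
  using assms(2,3) unfolding reach_def
  by (induction rule: rtrancl_induct) (use assms(1) in auto)

lemma recurrent_reach: "recurrent Q s \<Longrightarrow> (s, t) \<in> reach Q \<Longrightarrow> recurrent Q t"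
  unfolding recurrent_def by (meson reach_trans)

text \<open>A state whose set of successors is of minimal cardinality is recurrent.\<close>

lemma ex_reachable_recurrent:
  fixes Q :: "'s::finite \<Rightarrow> 's \<Rightarrow> real"
  obtains u where "(s, u) \<in> reach Q" and "recurrent Q u"
proof -
  define succs where "succs x = {v. (x, v) \<in> reach Q}" for x
  have "\<exists>u. (s, u) \<in> reach Q \<and> (\<forall>y. (s, y) \<in> reach Q \<longrightarrow> card (succs u) \<le> card (succs y))"
    by (rule ex_has_least_nat) (rule reach_refl)
  then obtain u where u: "(s, u) \<in> reach Q"
    and u_min: "\<And>y. (s, y) \<in> reach Q \<Longrightarrow> card (succs u) \<le> card (succs y)" by blast
  have "recurrent Q u"
    unfolding recurrent_def
  proof (intro allI impI)
    fix t assume ut: "(u, t) \<in> reach Q"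
    have sub: "succs t \<subseteq> succs u" unfolding succs_def using reach_trans[OF ut] by auto
    have "card (succs u) \<le> card (succs t)" by (rule u_min[OF reach_trans[OF u ut]])
    then have "card (succs t) = card (succs u)" using card_mono[OF _ sub] by simp
    then have "succs t = succs u" using card_subset_eq[OF _ sub] by simp
    moreover have "u \<in> succs u" unfolding succs_def by (simp add: reach_refl)
    ultimately have "u \<in> succs t" by simp
    then show "(t, u) \<in> reach Q" unfolding succs_def by simp
  qed
  with u that show thesis by blast
qed

lemma superharmonic_min_closed:
  fixes Q :: "'s::finite \<Rightarrow> 's \<Rightarrow> real"
  assumes Q: "stochastic Q" and min: "\<And>t. m \<le> h t" and "h s = m"
    and "(\<Sum>t\<in>UNIV. Q s t * h t) \<le> h s" and "0 < Q s t"
  shows "h t = m"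
proof -
  have "(\<Sum>t\<in>UNIV. Q s t * (h t - m)) = (\<Sum>t\<in>UNIV. Q s t * h t) - m"
    using stochastic_sum_const[OF Q, of s m] by (simp add: algebra_simps sum_subtractf)
  also have "\<dots> \<le> 0" using assms by simp
  finally have "(\<Sum>t\<in>UNIV. Q s t * (h t - m)) \<le> 0" .
  moreover have nonneg: "\<forall>t\<in>UNIV. 0 \<le> Q s t * (h t - m)"
    using Q min unfolding stochastic_def by simp
  ultimately have "(\<Sum>t\<in>UNIV. Q s t * (h t - m)) = 0" by (simp add: sum_nonneg order_antisym)
  then have "Q s t * (h t - m) = 0"
    using sum_nonneg_eq_0_iff[of UNIV "\<lambda>t. Q s t * (h t - m)"] nonneg by simp
  with \<open>0 < Q s t\<close> show ?thesis by simp
qed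

lemma subharmonic_max_closed:
  fixes Q :: "'s::finite \<Rightarrow> 's \<Rightarrow> real"
  assumes Q: "stochastic Q" and max: "\<And>t. h t \<le> M" and "h s = M"
    and "h s \<le> (\<Sum>t\<in>UNIV. Q s t * h t)" and "0 < Q s t"
  shows "h t = M"
proof -
  have min: "- M \<le> - h t" for t using max[of t] by simp
  have super: "(\<Sum>t\<in>UNIV. Q s t * - h t) \<le> - h s" using assms(4) by (simp add: sum_negf)
  have "- h t = - M"
    using superharmonic_min_closed[where h="\<lambda>t. - h t" and m="- M", OF Q min _ super assms(5)] assms(3)
    by simp
  then show ?thesis by simp
qed

lemma superharmonic_recurrent_le:
  fixes Q :: "'s::finite \<Rightarrow> 's \<Rightarrow> real"
  assumes Q: "stochastic Q" and src: "single_recurrent_class Q"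
    and super: "\<And>s. (\<Sum>t\<in>UNIV. Q s t * h t) \<le> h s" and u: "recurrent Q u"
  shows "h u \<le> h s"
proof -
  define m where "m = Min (range h)"
  define M where "M = {s. h s = m}"
  have min: "m \<le> h t" for t unfolding m_def by simp
  have "m \<in> range h" unfolding m_def by (rule Min_in) auto
  then obtain s0 where s0: "s0 \<in> M" unfolding M_def by auto
  have closed: "t \<in> M" if "s \<in> M" "0 < Q s t" for s t
    using superharmonic_min_closed[OF Q min _ super that(2)] that(1) unfolding M_def by simp
  obtain u0 where u0: "(s0, u0) \<in> reach Q" "recurrent Q u0" by (rule ex_reachable_recurrent)
  have "u0 \<in> M" using closed u0(1) s0 by (rule reach_closed)
  moreover have "(u0, u) \<in> reach Q" using src u0(2) u unfolding single_recurrent_class_def by blast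
  ultimately have "u \<in> M" using closed by (blast intro: reach_closed)
  then show ?thesis using min unfolding M_def by simp
qed

lemma harmonic_const:
  fixes Q :: "'s::finite \<Rightarrow> 's \<Rightarrow> real"
  assumes Q: "stochastic Q" and src: "single_recurrent_class Q"
    and harm: "\<And>s. (\<Sum>t\<in>UNIV. Q s t * h t) = h s"
  shows "h s = h t"
proof -
  obtain u where u: "recurrent Q u" using src unfolding single_recurrent_class_def by blast
  have "h u \<le> h x" for x by (rule superharmonic_recurrent_le[OF Q src _ u]) (simp add: harm)
  moreover have "- h u \<le> - h x" for x
    by (rule superharmonic_recurrent_le[OF Q src _ u]) (simp add: harm sum_negf)
  ultimately have "h x = h u" for x by (meson antisym neg_le_iff_le)
  then show ?thesis by metis
qed

lemma poisson_lin:
  assumes "poisson Q r1 g1 b1" and "poisson Q r2 g2 b2"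
  shows "poisson Q (\<lambda>s. x * r1 s + y * r2 s) (x * g1 + y * g2) (\<lambda>s. x * b1 s + y * b2 s)"
proof -
  have "x * (g1 + b1 s) + y * (g2 + b2 s)
      = x * (r1 s + (\<Sum>t\<in>UNIV. Q s t * b1 t)) + y * (r2 s + (\<Sum>t\<in>UNIV. Q s t * b2 t))" for s
    using assms unfolding poisson_def by simp
  then show ?thesis
    unfolding poisson_def by (simp add: algebra_simps sum.distrib sum_distrib_left)
qed

lemma poisson_diff:
  "poisson Q r1 g1 b1 \<Longrightarrow> poisson Q r2 g2 b2 \<Longrightarrow>
    poisson Q (\<lambda>s. r1 s - r2 s) (g1 - g2) (\<lambda>s. b1 s - b2 s)"
  using poisson_lin[of Q r1 g1 b1 r2 g2 b2 1 "-1"] by simp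

lemma poisson_scale: "poisson Q r g b \<Longrightarrow> poisson Q (\<lambda>s. c * r s) (c * g) (\<lambda>s. c * b s)"
  using poisson_lin[of Q r g b r g b c 0] by simp

lemma poisson_sum:
  assumes "finite I" and "\<And>i. i \<in> I \<Longrightarrow> poisson Q (R i) (G i) (B i)"
  shows "poisson Q (\<lambda>s. \<Sum>i\<in>I. R i s) (\<Sum>i\<in>I. G i) (\<lambda>s. \<Sum>i\<in>I. B i s)"
  using assms
proof (induction I rule: finite_induct)
  case empty
  then show ?case unfolding poisson_def by simp
next
  case (insert i I)
  then have "poisson Q (\<lambda>s. 1 * R i s + 1 * (\<Sum>i\<in>I. R i s)) (1 * G i + 1 * (\<Sum>i\<in>I. G i))
      (\<lambda>s. 1 * B i s + 1 * (\<Sum>i\<in>I. B i s))"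
    by (intro poisson_lin) auto
  with insert show ?case by simp
qed

lemma poisson_shift:
  assumes "stochastic Q" and "poisson Q rr g b"
  shows "poisson Q rr g (\<lambda>s. b s + c)"
proof -
  have "(\<Sum>t\<in>UNIV. Q s t * (b t + c)) = (\<Sum>t\<in>UNIV. Q s t * b t) + c" for s
    using stochastic_sum_const[OF assms(1), of s c] by (simp add: distrib_left sum.distrib)
  then show ?thesis using assms(2) unfolding poisson_def by simp
qed

text \<open>Evaluate the Poisson equation at a minimiser of the bias on the closed set C.\<close>

lemma poisson_gain_nonneg:
  fixes Q :: "'s::finite \<Rightarrow> 's \<Rightarrow> real"
  assumes Q: "stochastic Q" and p: "poisson Q rr g b"
    and "C \<noteq> {}" and closed: "\<And>s t. s \<in> C \<Longrightarrow> 0 < Q s t \<Longrightarrow> t \<in> C"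
    and nonneg: "\<And>s. s \<in> C \<Longrightarrow> 0 \<le> rr s"
  shows "0 \<le> g"
proof -
  have "Min (b ` C) \<in> b ` C" using \<open>C \<noteq> {}\<close> by (intro Min_in) auto
  then obtain s where s: "s \<in> C" "b s = Min (b ` C)" by auto
  have s_min: "b s \<le> b t" if "t \<in> C" for t unfolding s(2) by (rule Min_le) (use that in auto)
  have "Q s t * b s \<le> Q s t * b t" for t
  proof (cases "0 < Q s t")
    case True
    then show ?thesis using closed[OF s(1) True] s_min by (simp add: mult_left_mono)
  next
    case False
    moreover have "0 \<le> Q s t" using Q unfolding stochastic_def by simp
    ultimately have "Q s t = 0" by simp
    then show ?thesis by simp
  qed
  then have "(\<Sum>t\<in>UNIV. Q s t * b s) \<le> (\<Sum>t\<in>UNIV. Q s t * b t)" by (rule sum_mono)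
  then have "b s \<le> (\<Sum>t\<in>UNIV. Q s t * b t)" using stochastic_sum_const[OF Q] by simp
  moreover have "g + b s = rr s + (\<Sum>t\<in>UNIV. Q s t * b t)" using p unfolding poisson_def by simp
  ultimately show ?thesis using nonneg[OF s(1)] by linarith
qed

lemma poisson_unique:
  fixes Q :: "'s::finite \<Rightarrow> 's \<Rightarrow> real"
  assumes Q: "stochastic Q" and src: "single_recurrent_class Q"
    and p1: "poisson Q rr g1 b1" and p2: "poisson Q rr g2 b2"
  shows "g1 = g2 \<and> (\<forall>s. b1 s = b2 s + (b1 s0 - b2 s0))"
proof -
  have pd: "poisson Q (\<lambda>s. 0) (g1 - g2) (\<lambda>s. b1 s - b2 s)" using poisson_diff[OF p1 p2] by simp
  have "0 \<le> g1 - g2" by (rule poisson_gain_nonneg[OF Q pd, of UNIV]) simp_all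
  moreover have "0 \<le> -1 * (g1 - g2)"
    by (rule poisson_gain_nonneg[OF Q poisson_scale[OF pd, of "-1"], of UNIV]) simp_all
  ultimately have g: "g1 = g2" by simp
  have "(\<Sum>t\<in>UNIV. Q s t * (b1 t - b2 t)) = b1 s - b2 s" for s
  proof -
    have "g1 - g2 + (b1 s - b2 s) = 0 + (\<Sum>t\<in>UNIV. Q s t * (b1 t - b2 t))"
      using pd unfolding poisson_def by blast
    then show ?thesis using g by linarith
  qed
  then have "b1 s - b2 s = b1 s0 - b2 s0" for s by (rule harmonic_const[OF Q src])
  with g show ?thesis by (simp add: algebra_simps)
qed

text \<open>Encode a pair (g, b) with b s0 = 0 as one vector whose s0-coordinate is g; the Poisson
  operator (g, b) \<mapsto> g + b - Q b is then a linear endomorphism, injective by uniqueness and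
  hence onto.\<close>

lemma poisson_exists:
  fixes Q :: "'s::finite \<Rightarrow> 's \<Rightarrow> real"
  assumes Q: "stochastic Q" and src: "single_recurrent_class Q"
  obtains g b where "poisson Q rr g b"
proof -
  fix s0 :: 's
  define bias_of :: "real^'s \<Rightarrow> 's \<Rightarrow> real" where "bias_of x s = of_bool (s \<noteq> s0) * x$s" for x s
  define T :: "real^'s \<Rightarrow> real^'s" where
    "T x = (\<chi> s. x$s0 + bias_of x s - (\<Sum>t\<in>UNIV. Q s t * bias_of x t))" for x
  have T_poisson: "poisson Q (\<lambda>s. T x $ s) (x$s0) (bias_of x)" for x
    unfolding poisson_def T_def by simp
  have lin: "linear T"
    by (rule linearI)
      (simp_all add: T_def bias_of_def vec_eq_iff algebra_simps sum.distrib sum_distrib_left)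
  have "x = 0" if "T x = 0" for x
  proof -
    have p1: "poisson Q (\<lambda>s. 0) (x$s0) (bias_of x)" using T_poisson[of x] that by simp
    have p2: "poisson Q (\<lambda>s. 0) 0 (\<lambda>s. 0)" unfolding poisson_def by simp
    have "x$s0 = 0" and eq: "\<And>s. bias_of x s = bias_of x s0"
      using poisson_unique[OF Q src p1 p2, of s0] by auto
    then have "x$s = 0" for s using eq[of s] by (cases "s = s0") (auto simp: bias_of_def)
    then show ?thesis by (simp add: vec_eq_iff)
  qed
  then have "inj T" using linear_inj_iff_eq_0[OF lin] by blast
  then obtain x where "T x = (\<chi> s. rr s)" using linear_inj_imp_surj[OF lin] by (metis surjD)
  then show thesis using that T_poisson[of x] by simp
qed

lemma stationary_gain:
  fixes Q :: "'s::finite \<Rightarrow> 's \<Rightarrow> real"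
  assumes mu: "stationary Q \<mu>" and p: "poisson Q rr g b"
  shows "(\<Sum>s\<in>UNIV. \<mu> s * rr s) = g"
proof -
  have "(\<Sum>s\<in>UNIV. \<mu> s * (\<Sum>t\<in>UNIV. Q s t * b t)) = (\<Sum>s\<in>UNIV. \<Sum>t\<in>UNIV. \<mu> s * Q s t * b t)"
    by (simp add: sum_distrib_left mult.assoc)
  also have "\<dots> = (\<Sum>t\<in>UNIV. (\<Sum>s\<in>UNIV. \<mu> s * Q s t) * b t)"
    by (subst sum.swap) (simp add: sum_distrib_right)
  also have "\<dots> = (\<Sum>t\<in>UNIV. \<mu> t * b t)" using mu unfolding stationary_def by simp
  finally have flow: "(\<Sum>s\<in>UNIV. \<mu> s * (\<Sum>t\<in>UNIV. Q s t * b t)) = (\<Sum>t\<in>UNIV. \<mu> t * b t)" .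
  have "g + (\<Sum>s\<in>UNIV. \<mu> s * b s) = (\<Sum>s\<in>UNIV. \<mu> s * (g + b s))"
    using mu unfolding stationary_def by (simp add: distrib_left sum.distrib sum_distrib_right[symmetric])
  also have "\<dots> = (\<Sum>s\<in>UNIV. \<mu> s * rr s) + (\<Sum>s\<in>UNIV. \<mu> s * (\<Sum>t\<in>UNIV. Q s t * b t))"
    using p unfolding poisson_def by (simp add: distrib_left sum.distrib)
  finally show ?thesis using flow by simp
qed

lemma poisson_basis:
  fixes Q :: "'s::finite \<Rightarrow> 's \<Rightarrow> real"
  assumes Q: "stochastic Q" and src: "single_recurrent_class Q"
  obtains G B where "\<And>t. poisson Q (\<lambda>s. of_bool (s = t)) (G t) (B t)"
    and "\<And>rr. poisson Q rr (\<Sum>t\<in>UNIV. rr t * G t) (\<lambda>s. \<Sum>t\<in>UNIV. rr t * B t s)"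
proof -
  have "\<forall>t. \<exists>g b. poisson Q (\<lambda>s. of_bool (s = t)) g b" using poisson_exists[OF Q src] by metis
  then obtain G B where GB: "\<And>t. poisson Q (\<lambda>s. of_bool (s = t)) (G t) (B t)" by metis
  have "poisson Q (\<lambda>s. \<Sum>t\<in>UNIV. rr t * of_bool (s = t)) (\<Sum>t\<in>UNIV. rr t * G t)
      (\<lambda>s. \<Sum>t\<in>UNIV. rr t * B t s)" for rr
    by (rule poisson_sum) (simp_all add: poisson_scale[OF GB])
  then show thesis by (intro that[OF GB]) simp
qed

text \<open>A stationary distribution is the vector of gains of the indicator rewards.\<close>

lemma stationary_exists:
  fixes Q :: "'s::finite \<Rightarrow> 's \<Rightarrow> real"
  assumes Q: "stochastic Q" and src: "single_recurrent_class Q"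
  obtains \<mu> where "stationary Q \<mu>"
proof -
  obtain G B where GB: "\<And>t. poisson Q (\<lambda>s. of_bool (s = t)) (G t) (B t)"
    and rep: "\<And>rr. poisson Q rr (\<Sum>t\<in>UNIV. rr t * G t) (\<lambda>s. \<Sum>t\<in>UNIV. rr t * B t s)"
    using poisson_basis[OF Q src] by blast
  have "0 \<le> G t" for t by (rule poisson_gain_nonneg[OF Q GB, of UNIV]) simp_all
  moreover have "poisson Q (\<lambda>s. 1) 1 (\<lambda>s. 0)" unfolding poisson_def by simp
  then have "(\<Sum>t\<in>UNIV. 1 * G t) = 1" using poisson_unique[OF Q src rep[of "\<lambda>s. 1"]] by blast
  moreover have "(\<Sum>s\<in>UNIV. G s * Q s t) = G t" for t
  proof -
    have "poisson Q (\<lambda>s. Q s t - of_bool (s = t)) 0 (\<lambda>s. - of_bool (s = t))"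
      unfolding poisson_def by (simp add: sum_negf)
    from poisson_unique[OF Q src rep this]
    have "(\<Sum>s\<in>UNIV. (Q s t - of_bool (s = t)) * G s) = 0" by blast
    then show ?thesis by (simp add: algebra_simps sum_subtractf)
  qed
  ultimately show thesis using that unfolding stationary_def by auto
qed

text \<open>The gain of the indicator reward of a transient state vanishes, because that reward is zero
  on the closed set of recurrent states.\<close>

lemma stationary_transient_zero:
  fixes Q :: "'s::finite \<Rightarrow> 's \<Rightarrow> real"
  assumes Q: "stochastic Q" and src: "single_recurrent_class Q"
    and mu: "stationary Q \<mu>" and "\<not> recurrent Q t0"
  shows "\<mu> t0 = 0"
proof -
  obtain g b where p: "poisson Q (\<lambda>s. of_bool (s = t0)) g b" using poisson_exists[OF Q src] .
  let ?R = "{u. recurrent Q u}"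
  have R: "?R \<noteq> {}" using src unfolding single_recurrent_class_def by blast
  have closed: "t \<in> ?R" if "s \<in> ?R" "0 < Q s t" for s t
    using recurrent_reach[OF _ reach_step[of Q s t, OF that(2)]] that(1) by simp
  have "0 \<le> g" using poisson_gain_nonneg[OF Q p R closed] by simp
  moreover have "-1 * of_bool (s = t0) = (0::real)" if "s \<in> ?R" for s
    using that \<open>\<not> recurrent Q t0\<close> by auto
  then have "0 \<le> -1 * g" using poisson_gain_nonneg[OF Q poisson_scale[OF p, of "-1"] R closed] by simp
  moreover have "(\<Sum>s\<in>UNIV. \<mu> s * of_bool (s = t0)) = \<mu> t0"
    by simp
  ultimately show ?thesis using stationary_gain[OF mu p] by simp
qed

lemma stationary_unique:
  fixes Q :: "'s::finite \<Rightarrow> 's \<Rightarrow> real"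
  assumes Q: "stochastic Q" and src: "single_recurrent_class Q"
    and "stationary Q \<mu>1" and "stationary Q \<mu>2"
  shows "\<mu>1 = \<mu>2"
proof
  fix t
  obtain g b where p: "poisson Q (\<lambda>s. of_bool (s = t)) g b" using poisson_exists[OF Q src] .
  have "(\<Sum>s\<in>UNIV. \<mu> s * of_bool (s = t)) = \<mu> t" for \<mu> :: "'s \<Rightarrow> real"
    by simp
  then show "\<mu>1 t = \<mu>2 t" using stationary_gain[OF assms(3) p] stationary_gain[OF assms(4) p] by simp
qed

lemma superharmonic_stationary:
  fixes Q :: "'s::finite \<Rightarrow> 's \<Rightarrow> real"
  assumes Q: "stochastic Q" and src: "single_recurrent_class Q" and mu: "stationary Q \<mu>"
    and super: "\<And>s. (\<Sum>t\<in>UNIV. Q s t * h t) \<le> h s"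
  shows "(\<Sum>t\<in>UNIV. \<mu> t * h t) \<le> h s"
proof -
  have "\<mu> t * h t \<le> \<mu> t * h s" for t
    using superharmonic_recurrent_le[OF Q src super] stationary_transient_zero[OF Q src mu, of t] mu
    unfolding stationary_def by (cases "recurrent Q t") (auto intro: mult_left_mono)
  then have "(\<Sum>t\<in>UNIV. \<mu> t * h t) \<le> (\<Sum>t\<in>UNIV. \<mu> t * h s)" by (rule sum_mono)
  also have "\<dots> = h s" using mu unfolding stationary_def by (simp add: sum_distrib_right[symmetric])
  finally show ?thesis .
qed

section \<open>Policies of a two-action MDP\<close>

lemma stationary_sum_shift:
  "stationary Q \<mu> \<Longrightarrow> (\<Sum>s\<in>UNIV. \<mu> s * (b s + c)) = (\<Sum>s\<in>UNIV. \<mu> s * b s) + c"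
  unfolding stationary_def by (simp add: distrib_left sum.distrib sum_distrib_right[symmetric])

lemma stationary_pol_trans_agree:
  assumes mu: "stationary (pol_trans P \<pi>') \<mu>" and agree: "\<And>s. (s \<in> \<pi>) \<noteq> (s \<in> \<pi>') \<Longrightarrow> \<mu> s = 0"
  shows "stationary (pol_trans P \<pi>) \<mu>"
proof -
  have "\<mu> s * pol_trans P \<pi> s t = \<mu> s * pol_trans P \<pi>' s t" for s t
    using agree[of s] unfolding pol_trans_def by (cases "(s \<in> \<pi>) = (s \<in> \<pi>')") auto
  then have "(\<Sum>s\<in>UNIV. \<mu> s * pol_trans P \<pi> s t) = (\<Sum>s\<in>UNIV. \<mu> s * pol_trans P \<pi>' s t)" for t
    by presburger
  then show ?thesis using mu unfolding stationary_def by simp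
qed

lemma single_recurrent_class_pol_trans: "unichain P \<Longrightarrow> single_recurrent_class (pol_trans P \<pi>)"
  unfolding unichain_def by blast

lemma gain_eqI:
  assumes mdp: "is_mdp P" and uc: "unichain P"
    and p: "poisson (pol_trans P \<pi>) (pol_rew r l \<pi>) g b"
  shows "gain P r l \<pi> = g"
  unfolding gain_def
proof (rule the_equality)
  show "\<exists>b. poisson (pol_trans P \<pi>) (pol_rew r l \<pi>) g b" using p by blast
next
  fix g' assume "\<exists>b. poisson (pol_trans P \<pi>) (pol_rew r l \<pi>) g' b"
  then show "g' = g"
    using poisson_unique[OF stochastic_pol_trans[OF mdp] single_recurrent_class_pol_trans[OF uc] _ p]
    by blast
qed

lemma ex1_normalised_bias:
  fixes P :: "bool \<Rightarrow> 's::finite \<Rightarrow> 's \<Rightarrow> real"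
  assumes mdp: "is_mdp P" and uc: "unichain P"
  shows "\<exists>!b. poisson (pol_trans P \<pi>) (pol_rew r l \<pi>) (gain P r l \<pi>) b
    \<and> (\<forall>\<mu>. stationary (pol_trans P \<pi>) \<mu> \<longrightarrow> (\<Sum>s\<in>UNIV. \<mu> s * b s) = 0)"
proof -
  let ?Q = "pol_trans P \<pi>" and ?R = "pol_rew r l \<pi>"
  have Q: "stochastic ?Q" and src: "single_recurrent_class ?Q"
    using stochastic_pol_trans[OF mdp] single_recurrent_class_pol_trans[OF uc] .
  obtain g b0 where p0: "poisson ?Q ?R g b0" using poisson_exists[OF Q src] .
  obtain \<mu>0 where mu0: "stationary ?Q \<mu>0" using stationary_exists[OF Q src] .
  define b where "b s = b0 s + - (\<Sum>t\<in>UNIV. \<mu>0 t * b0 t)" for s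
  have pb: "poisson ?Q ?R (gain P r l \<pi>) b"
    unfolding b_def gain_eqI[OF mdp uc p0] by (rule poisson_shift[OF Q p0])
  have normal: "(\<Sum>s\<in>UNIV. \<mu> s * b s) = 0" if "stationary ?Q \<mu>" for \<mu>
    using stationary_unique[OF Q src that mu0]
      stationary_sum_shift[OF mu0, of b0 "- (\<Sum>t\<in>UNIV. \<mu>0 t * b0 t)"]
    unfolding b_def by simp
  show ?thesis
  proof (rule ex1I[of _ b])
    fix b' assume b': "poisson ?Q ?R (gain P r l \<pi>) b'
      \<and> (\<forall>\<mu>. stationary ?Q \<mu> \<longrightarrow> (\<Sum>s\<in>UNIV. \<mu> s * b' s) = 0)"
    obtain c where shift: "\<And>s. b' s = b s + c" using poisson_unique[OF Q src _ pb] b' by blast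
    then have "b' = (\<lambda>s. b s + c)" by auto
    moreover have "(\<Sum>s\<in>UNIV. \<mu>0 s * b' s) = 0" using b' mu0 by blast
    ultimately have "(\<Sum>s\<in>UNIV. \<mu>0 s * b s) + c = 0" using stationary_sum_shift[OF mu0, of b c] by simp
    then show "b' = b" using \<open>b' = (\<lambda>s. b s + c)\<close> normal[OF mu0] by simp
  qed (use pb normal in blast)
qed

lemma poisson_gain_bias:
  "is_mdp P \<Longrightarrow> unichain P \<Longrightarrow>
    poisson (pol_trans P \<pi>) (pol_rew r l \<pi>) (gain P r l \<pi>) (bias P r l \<pi>)"
  using theI'[OF ex1_normalised_bias] unfolding bias_def by blast

lemma stationary_bias_zero:
  "is_mdp P \<Longrightarrow> unichain P \<Longrightarrow> stationary (pol_trans P \<pi>) \<mu> \<Longrightarrow>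
    (\<Sum>s\<in>UNIV. \<mu> s * bias P r l \<pi> s) = 0"
  using theI'[OF ex1_normalised_bias] unfolding bias_def by blast

lemma bias_eq_shift:
  assumes mdp: "is_mdp P" and uc: "unichain P"
    and p: "poisson (pol_trans P \<pi>) (pol_rew r l \<pi>) g b"
  obtains c where "\<And>s. bias P r l \<pi> s = b s + c"
  using poisson_unique[OF stochastic_pol_trans[OF mdp] single_recurrent_class_pol_trans[OF uc]
      poisson_gain_bias[OF mdp uc] p] by blast

definition adv_wrt ::
  "(bool \<Rightarrow> 's::finite \<Rightarrow> 's \<Rightarrow> real) \<Rightarrow> (bool \<Rightarrow> 's \<Rightarrow> real) \<Rightarrow> real \<Rightarrow> ('s \<Rightarrow> real) \<Rightarrow> 's \<Rightarrow> real" where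
  "adv_wrt P r l b s = r True s - l - r False s + (\<Sum>t\<in>UNIV. (P True s t - P False s t) * b t)"

definition qvalue ::
  "(bool \<Rightarrow> 's::finite \<Rightarrow> 's \<Rightarrow> real) \<Rightarrow> (bool \<Rightarrow> 's \<Rightarrow> real) \<Rightarrow> real \<Rightarrow> bool \<Rightarrow> ('s \<Rightarrow> real) \<Rightarrow> 's \<Rightarrow> real" where
  "qvalue P r l a b s = (if a then r True s - l else r False s) + (\<Sum>t\<in>UNIV. P a s t * b t)"

lemma adv_wrt_qvalue: "adv_wrt P r l b s = qvalue P r l True b s - qvalue P r l False b s"
  unfolding adv_wrt_def qvalue_def by (simp add: algebra_simps sum_subtractf)

lemma qvalue_pol: "qvalue P r l (s \<in> \<pi>) b s = pol_rew r l \<pi> s + (\<Sum>t\<in>UNIV. pol_trans P \<pi> s t * b t)"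
  unfolding qvalue_def pol_rew_def pol_trans_def by simp

lemma poisson_iff_qvalue:
  "poisson (pol_trans P \<pi>) (pol_rew r l \<pi>) g b \<longleftrightarrow> (\<forall>s. g + b s = qvalue P r l (s \<in> \<pi>) b s)"
  unfolding poisson_def qvalue_pol by simp

lemma gain_bias_qvalue:
  "is_mdp P \<Longrightarrow> unichain P \<Longrightarrow>
    gain P r l \<pi> + bias P r l \<pi> s = qvalue P r l (s \<in> \<pi>) (bias P r l \<pi>) s"
  using poisson_gain_bias unfolding poisson_iff_qvalue by blast

lemma adv_wrt_shift:
  assumes "is_mdp P"
  shows "adv_wrt P r l (\<lambda>t. b t + c) s = adv_wrt P r l b s"
proof -
  have "(\<Sum>t\<in>UNIV. P a s t * c) = c" for a
    using stochastic_sum_const[OF stochastic_pol_trans[OF assms, of "if a then UNIV else {}"]]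
    unfolding pol_trans_def by (cases a) simp_all
  then show ?thesis unfolding adv_wrt_def by (simp add: algebra_simps sum.distrib sum_subtractf)
qed

lemma adv_eq_adv_wrt:
  assumes mdp: "is_mdp P" and uc: "unichain P"
    and p: "poisson (pol_trans P \<pi>) (pol_rew r l \<pi>) g b"
  shows "adv P r l \<pi> s = adv_wrt P r l b s"
proof -
  obtain c where "\<And>t. bias P r l \<pi> t = b t + c" using bias_eq_shift[OF mdp uc p] by blast
  then have "adv P r l \<pi> s = adv_wrt P r l (\<lambda>t. b t + c) s" unfolding adv_def adv_wrt_def by simp
  then show ?thesis using adv_wrt_shift[OF mdp] by simp
qed

definition sign_consistent ::
  "(bool \<Rightarrow> 's::finite \<Rightarrow> 's \<Rightarrow> real) \<Rightarrow> (bool \<Rightarrow> 's \<Rightarrow> real) \<Rightarrow> real \<Rightarrow> 's set \<Rightarrow> bool" where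
  "sign_consistent P r l \<pi> \<longleftrightarrow>
     (\<forall>s. (s \<in> \<pi> \<longrightarrow> 0 \<le> adv P r l \<pi> s) \<and> (s \<notin> \<pi> \<longrightarrow> adv P r l \<pi> s \<le> 0))"

lemma sign_consistent_qvalue_le:
  assumes mdp: "is_mdp P" and uc: "unichain P" and sc: "sign_consistent P r l \<pi>"
  shows "qvalue P r l a (bias P r l \<pi>) s \<le> gain P r l \<pi> + bias P r l \<pi> s"
  using sc gain_bias_qvalue[OF mdp uc, of r l \<pi> s]
  unfolding sign_consistent_def adv_def adv_wrt_def[symmetric] adv_wrt_qvalue
  by (cases a; cases "s \<in> \<pi>") force+

definition improvement ::
  "(bool \<Rightarrow> 's::finite \<Rightarrow> 's \<Rightarrow> real) \<Rightarrow> (bool \<Rightarrow> 's \<Rightarrow> real) \<Rightarrow> real \<Rightarrow> 's set \<Rightarrow> 's set \<Rightarrow> 's \<Rightarrow> real" where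
  "improvement P r l \<pi> \<pi>' s =
     qvalue P r l (s \<in> \<pi>') (bias P r l \<pi>) s - (gain P r l \<pi> + bias P r l \<pi> s)"

lemma poisson_improvement:
  "poisson (pol_trans P \<pi>') (\<lambda>s. pol_rew r l \<pi>' s - improvement P r l \<pi> \<pi>' s)
     (gain P r l \<pi>) (bias P r l \<pi>)"
  unfolding poisson_def improvement_def qvalue_pol by simp

lemma gain_difference:
  assumes mdp: "is_mdp P" and uc: "unichain P" and mu: "stationary (pol_trans P \<pi>') \<mu>"
  shows "gain P r l \<pi>' = gain P r l \<pi> + (\<Sum>s\<in>UNIV. \<mu> s * improvement P r l \<pi> \<pi>' s)"
  using stationary_gain[OF mu poisson_improvement] stationary_gain[OF mu poisson_gain_bias[OF mdp uc]]
  by (simp add: algebra_simps sum_subtractf)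

lemma policy_improvement_gain:
  fixes P :: "bool \<Rightarrow> 's::finite \<Rightarrow> 's \<Rightarrow> real"
  assumes mdp: "is_mdp P" and uc: "unichain P" and "\<And>s. 0 \<le> improvement P r l \<pi> \<pi>' s"
  shows "gain P r l \<pi> \<le> gain P r l \<pi>'"
proof -
  obtain \<mu> where mu: "stationary (pol_trans P \<pi>') \<mu>"
    using stationary_exists[OF stochastic_pol_trans[OF mdp] single_recurrent_class_pol_trans[OF uc]] .
  then have "0 \<le> (\<Sum>s\<in>UNIV. \<mu> s * improvement P r l \<pi> \<pi>' s)"
    using assms(3) unfolding stationary_def by (simp add: sum_nonneg)
  then show ?thesis using gain_difference[OF mdp uc mu, of r l \<pi>] by simp
qed

lemma poisson_zero_gain_ge:
  fixes Q :: "'s::finite \<Rightarrow> 's \<Rightarrow> real"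
  assumes Q: "stochastic Q" and src: "single_recurrent_class Q" and mu: "stationary Q \<mu>"
    and p: "poisson Q \<phi> 0 d" and nonneg: "\<And>s. 0 \<le> \<phi> s" and "0 \<le> (\<Sum>s\<in>UNIV. \<mu> s * d s)"
  shows "\<phi> s \<le> d s"
proof -
  have eq: "d s = \<phi> s + (\<Sum>t\<in>UNIV. Q s t * d t)" for s
  proof -
    have "0 + d s = \<phi> s + (\<Sum>t\<in>UNIV. Q s t * d t)" using p unfolding poisson_def by blast
    then show ?thesis by simp
  qed
  have "(\<Sum>t\<in>UNIV. \<mu> t * d t) \<le> d s" for s
    by (rule superharmonic_stationary[OF Q src mu]) (use eq nonneg in \<open>smt (verit)\<close>)
  then have "0 \<le> d t" for t using assms(6) by (meson order_trans)
  then have "0 \<le> (\<Sum>t\<in>UNIV. Q s t * d t)" using Q unfolding stochastic_def by (simp add: sum_nonneg)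
  then show ?thesis using eq[of s] by simp
qed

lemma policy_improvement_bias:
  fixes P :: "bool \<Rightarrow> 's::finite \<Rightarrow> 's \<Rightarrow> real"
  assumes mdp: "is_mdp P" and uc: "unichain P"
    and nonneg: "\<And>s. 0 \<le> improvement P r l \<pi> \<pi>' s" and le: "gain P r l \<pi>' \<le> gain P r l \<pi>"
    and pos: "\<And>s. (s \<in> \<pi>) \<noteq> (s \<in> \<pi>') \<Longrightarrow> 0 < improvement P r l \<pi> \<pi>' s"
  shows "bias P r l \<pi> s + improvement P r l \<pi> \<pi>' s \<le> bias P r l \<pi>' s"
proof -
  let ?Q' = "pol_trans P \<pi>'" and ?\<phi> = "improvement P r l \<pi> \<pi>'"
  have Q': "stochastic ?Q'" and src': "single_recurrent_class ?Q'"
    using stochastic_pol_trans[OF mdp] single_recurrent_class_pol_trans[OF uc] .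
  obtain \<mu> where mu: "stationary ?Q' \<mu>" using stationary_exists[OF Q' src'] .
  have mu_nonneg: "0 \<le> \<mu> s" for s using mu unfolding stationary_def by simp
  have "0 \<le> (\<Sum>s\<in>UNIV. \<mu> s * ?\<phi> s)" using mu_nonneg nonneg by (simp add: sum_nonneg)
  then have sum0: "(\<Sum>s\<in>UNIV. \<mu> s * ?\<phi> s) = 0" and geq: "gain P r l \<pi>' = gain P r l \<pi>"
    using gain_difference[OF mdp uc mu, of r l \<pi>] le by simp_all
  have "\<mu> s * ?\<phi> s = 0" for s
    using sum0 sum_nonneg_eq_0_iff[of UNIV "\<lambda>s. \<mu> s * ?\<phi> s"] mu_nonneg nonneg by simp
  then have "stationary (pol_trans P \<pi>) \<mu>"
    using stationary_pol_trans_agree[OF mu] pos by (metis less_irrefl mult_eq_0_iff)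
  then have "(\<Sum>s\<in>UNIV. \<mu> s * (bias P r l \<pi>' s - bias P r l \<pi> s)) = 0"
    using stationary_bias_zero[OF mdp uc] mu by (simp add: algebra_simps sum_subtractf)
  moreover have "poisson ?Q' ?\<phi> 0 (\<lambda>s. bias P r l \<pi>' s - bias P r l \<pi> s)"
    using poisson_diff[OF poisson_gain_bias[OF mdp uc, where \<pi>=\<pi>' and r=r and l=l]
        poisson_improvement[where \<pi>=\<pi> and \<pi>'=\<pi>' and r=r and l=l]] geq by simp
  ultimately have "?\<phi> s \<le> bias P r l \<pi>' s - bias P r l \<pi> s"
    using poisson_zero_gain_ge[OF Q' src' mu, where \<phi>="?\<phi>"
        and d="\<lambda>s. bias P r l \<pi>' s - bias P r l \<pi> s"] nonneg by simp
  then show ?thesis by simp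
qed

definition flip :: "'s set \<Rightarrow> 's \<Rightarrow> 's set" where
  "flip \<pi> s0 = (if s0 \<in> \<pi> then \<pi> - {s0} else insert s0 \<pi>)"

lemma mem_flip: "s \<in> flip \<pi> s0 \<longleftrightarrow> (if s = s0 then s0 \<notin> \<pi> else s \<in> \<pi>)"
  unfolding flip_def by auto

lemma improvement_flip:
  assumes "is_mdp P" and "unichain P"
  shows "improvement P r l \<pi> (flip \<pi> s0) s =
    (if s = s0 then (if s0 \<in> \<pi> then - adv P r l \<pi> s0 else adv P r l \<pi> s0) else 0)"
  using gain_bias_qvalue[OF assms, of r l \<pi> s]
  unfolding improvement_def mem_flip adv_def adv_wrt_def[symmetric] adv_wrt_qvalue by auto

lemma flip_improvement_nonneg:
  assumes "is_mdp P" and "unichain P" and "0 < improvement P r l \<pi> (flip \<pi> s0) s0"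
  shows "0 \<le> improvement P r l \<pi> (flip \<pi> s0) s"
  using assms(3) unfolding improvement_flip[OF assms(1,2)] by (auto split: if_splits)

lemma not_sign_consistent_improvable:
  assumes "is_mdp P" and "unichain P" and "\<not> sign_consistent P r l \<pi>"
  obtains s0 where "0 < improvement P r l \<pi> (flip \<pi> s0) s0"
  using assms(3) unfolding sign_consistent_def improvement_flip[OF assms(1,2)]
  by (metis neg_0_less_iff_less not_le)

text \<open>Flipping an improvable state does not decrease the gain and, if it does not increase it
  either, strictly increases the total bias.\<close>

lemma sum_bias_max_sign_consistent:
  fixes P :: "bool \<Rightarrow> 's::finite \<Rightarrow> 's \<Rightarrow> real"
  assumes mdp: "is_mdp P" and uc: "unichain P"
    and gain_max: "\<And>\<pi>'. gain P r l \<pi>' \<le> gain P r l \<pi>"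
    and bias_max: "\<And>\<pi>'. gain P r l \<pi>' = gain P r l \<pi> \<Longrightarrow>
                     (\<Sum>s\<in>UNIV. bias P r l \<pi>' s) \<le> (\<Sum>s\<in>UNIV. bias P r l \<pi> s)"
  shows "sign_consistent P r l \<pi>"
proof (rule ccontr)
  assume "\<not> sign_consistent P r l \<pi>"
  then obtain s0 where imp: "0 < improvement P r l \<pi> (flip \<pi> s0) s0"
    using not_sign_consistent_improvable[OF mdp uc] by blast
  let ?\<pi>' = "flip \<pi> s0"
  have nonneg: "0 \<le> improvement P r l \<pi> ?\<pi>' s" for s by (rule flip_improvement_nonneg[OF mdp uc imp])
  have g': "gain P r l ?\<pi>' = gain P r l \<pi>"
    using policy_improvement_gain[OF mdp uc nonneg] gain_max[of ?\<pi>'] by simp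
  have b: "bias P r l \<pi> s + improvement P r l \<pi> ?\<pi>' s \<le> bias P r l ?\<pi>' s" for s
    by (rule policy_improvement_bias[OF mdp uc nonneg])
       (use g' imp in \<open>auto simp: mem_flip split: if_splits\<close>)
  have "bias P r l \<pi> s \<le> bias P r l ?\<pi>' s" for s using b[of s] nonneg[of s] by linarith
  moreover have "bias P r l \<pi> s0 < bias P r l ?\<pi>' s0" using b[of s0] imp by linarith
  ultimately have "(\<Sum>s\<in>UNIV. bias P r l \<pi> s) < (\<Sum>s\<in>UNIV. bias P r l ?\<pi>' s)"
    by (intro sum_strict_mono_ex1) auto
  with bias_max[OF g'] show False by simp
qed

lemma bias_optimal_sign_consistent:
  assumes mdp: "is_mdp P" and uc: "unichain P" and bo: "bias_optimal P r l \<pi>"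
  shows "sign_consistent P r l \<pi>"
proof (rule sum_bias_max_sign_consistent[OF mdp uc])
  show gain_max: "gain P r l \<pi>' \<le> gain P r l \<pi>" for \<pi>'
    using bo unfolding bias_optimal_def gain_optimal_def by blast
  show "(\<Sum>s\<in>UNIV. bias P r l \<pi>' s) \<le> (\<Sum>s\<in>UNIV. bias P r l \<pi> s)"
    if "gain P r l \<pi>' = gain P r l \<pi>" for \<pi>'
    using bo gain_max that unfolding bias_optimal_def gain_optimal_def by (simp add: sum_mono)
qed

lemma sign_consistent_gain_optimal:
  fixes P :: "bool \<Rightarrow> 's::finite \<Rightarrow> 's \<Rightarrow> real"
  assumes mdp: "is_mdp P" and uc: "unichain P" and sc: "sign_consistent P r l \<pi>"
  shows "gain P r l \<pi>' \<le> gain P r l \<pi>"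
proof -
  obtain \<mu> where mu: "stationary (pol_trans P \<pi>') \<mu>"
    using stationary_exists[OF stochastic_pol_trans[OF mdp] single_recurrent_class_pol_trans[OF uc]] .
  have "improvement P r l \<pi> \<pi>' s \<le> 0" for s
    using sign_consistent_qvalue_le[OF mdp uc sc] unfolding improvement_def by simp
  then have "(\<Sum>s\<in>UNIV. \<mu> s * improvement P r l \<pi> \<pi>' s) \<le> 0"
    using mu unfolding stationary_def by (simp add: sum_nonpos mult_nonneg_nonpos)
  then show ?thesis using gain_difference[OF mdp uc mu, of r l \<pi>] by simp
qed

text \<open>The witness follows \<pi>' on the support of \<mu> and \<pi> elsewhere.\<close>

lemma sign_consistent_patch:
  fixes P :: "bool \<Rightarrow> 's::finite \<Rightarrow> 's \<Rightarrow> real"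
  assumes mdp: "is_mdp P" and uc: "unichain P" and sc: "sign_consistent P r l \<pi>"
    and geq: "gain P r l \<pi>' = gain P r l \<pi>" and mu: "stationary (pol_trans P \<pi>') \<mu>"
  obtains \<pi>'' where "gain P r l \<pi>'' = gain P r l \<pi>"
    and "\<And>s. bias P r l \<pi>'' s = bias P r l \<pi> s - (\<Sum>t\<in>UNIV. \<mu> t * bias P r l \<pi> t)"
proof -
  let ?g = "gain P r l \<pi>" and ?b = "bias P r l \<pi>" and ?\<phi> = "improvement P r l \<pi> \<pi>'"
  have mu_nonneg: "0 \<le> \<mu> s" for s using mu unfolding stationary_def by simp
  have nonpos: "?\<phi> s \<le> 0" for s
    using sign_consistent_qvalue_le[OF mdp uc sc] unfolding improvement_def by simp
  have "(\<Sum>s\<in>UNIV. \<mu> s * - ?\<phi> s) = 0" using gain_difference[OF mdp uc mu, of r l \<pi>] geq by (simp add: sum_negf)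
  moreover have "0 \<le> \<mu> s * - ?\<phi> s" for s
    using mult_nonneg_nonneg[OF mu_nonneg[of s], of "- ?\<phi> s"] nonpos[of s] by simp
  ultimately have zero: "\<mu> s * ?\<phi> s = 0" for s
    using sum_nonneg_eq_0_iff[of UNIV "\<lambda>s. \<mu> s * - ?\<phi> s"] by simp
  define \<pi>'' where "\<pi>'' = {s. if 0 < \<mu> s then s \<in> \<pi>' else s \<in> \<pi>}"
  have p: "poisson (pol_trans P \<pi>'') (pol_rew r l \<pi>'') ?g ?b"
    unfolding poisson_iff_qvalue
  proof
    fix s show "?g + ?b s = qvalue P r l (s \<in> \<pi>'') ?b s"
      using zero[of s] gain_bias_qvalue[OF mdp uc, of r l \<pi> s]
      unfolding \<pi>''_def improvement_def by auto
  qed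
  obtain c where c: "\<And>s. bias P r l \<pi>'' s = ?b s + c" using bias_eq_shift[OF mdp uc p] by blast
  have "\<mu> s = 0" if "(s \<in> \<pi>'') \<noteq> (s \<in> \<pi>')" for s
  proof (rule ccontr)
    assume "\<mu> s \<noteq> 0"
    then have "0 < \<mu> s" using mu_nonneg[of s] by simp
    then show False using that unfolding \<pi>''_def by simp
  qed
  then have mu'': "stationary (pol_trans P \<pi>'') \<mu>" by (rule stationary_pol_trans_agree[OF mu])
  have "(\<Sum>s\<in>UNIV. \<mu> s * (?b s + c)) = 0"
    using stationary_bias_zero[OF mdp uc mu'', of r l] c by simp
  then have "c = - (\<Sum>t\<in>UNIV. \<mu> t * ?b t)" using stationary_sum_shift[OF mu] by simp
  then show thesis using that[OF gain_eqI[OF mdp uc p]] c by simp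
qed

lemma bias_le_of_sum_bias_max:
  fixes P :: "bool \<Rightarrow> 's::finite \<Rightarrow> 's \<Rightarrow> real"
  assumes mdp: "is_mdp P" and uc: "unichain P" and sc: "sign_consistent P r l \<pi>"
    and geq: "gain P r l \<pi>' = gain P r l \<pi>"
    and max: "\<And>\<pi>''. gain P r l \<pi>'' = gain P r l \<pi> \<Longrightarrow>
                 (\<Sum>s\<in>UNIV. bias P r l \<pi>'' s) \<le> (\<Sum>s\<in>UNIV. bias P r l \<pi> s)"
  shows "bias P r l \<pi>' s \<le> bias P r l \<pi> s"
proof -
  let ?Q' = "pol_trans P \<pi>'" and ?b = "bias P r l \<pi>" and ?\<phi> = "improvement P r l \<pi> \<pi>'"
  have Q': "stochastic ?Q'" and src': "single_recurrent_class ?Q'"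
    using stochastic_pol_trans[OF mdp] single_recurrent_class_pol_trans[OF uc] .
  obtain \<mu> where mu: "stationary ?Q' \<mu>" using stationary_exists[OF Q' src'] .
  define m where "m = (\<Sum>t\<in>UNIV. \<mu> t * ?b t)"
  obtain \<pi>'' where g'': "gain P r l \<pi>'' = gain P r l \<pi>" and b'': "\<And>s. bias P r l \<pi>'' s = ?b s - m"
    using sign_consistent_patch[OF mdp uc sc geq mu] unfolding m_def by blast
  have "(\<Sum>s\<in>UNIV. ?b s - m) \<le> (\<Sum>s\<in>UNIV. ?b s)" using max[OF g''] b'' by simp
  then have "0 \<le> real CARD('s) * m" by (simp add: sum_subtractf)
  then have m: "0 \<le> m" by (simp add: zero_le_mult_iff)
  have "poisson ?Q' (\<lambda>s. - ?\<phi> s) 0 (\<lambda>s. ?b s - bias P r l \<pi>' s)"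
    using poisson_diff[OF poisson_improvement[where \<pi>=\<pi> and \<pi>'=\<pi>' and r=r and l=l]
        poisson_gain_bias[OF mdp uc, where \<pi>=\<pi>' and r=r and l=l]] geq by simp
  moreover have nonneg: "0 \<le> - ?\<phi> s" for s
    using sign_consistent_qvalue_le[OF mdp uc sc] unfolding improvement_def by simp
  moreover have "(\<Sum>t\<in>UNIV. \<mu> t * (?b t - bias P r l \<pi>' t)) = m"
    using stationary_bias_zero[OF mdp uc mu, of r l] unfolding m_def
    by (simp add: algebra_simps sum_subtractf)
  ultimately have "- ?\<phi> s \<le> ?b s - bias P r l \<pi>' s"
    using poisson_zero_gain_ge[OF Q' src' mu, where \<phi>="\<lambda>s. - ?\<phi> s"
        and d="\<lambda>s. ?b s - bias P r l \<pi>' s"] m by simp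
  then show ?thesis using nonneg[of s] by simp
qed

text \<open>A policy maximising the gain, and among those the total bias, is bias optimal.\<close>

lemma ex_bias_optimal:
  fixes P :: "bool \<Rightarrow> 's::finite \<Rightarrow> 's \<Rightarrow> real"
  assumes mdp: "is_mdp P" and uc: "unichain P"
  obtains \<pi> where "bias_optimal P r l \<pi>"
proof -
  define G where "G = Max (range (gain P r l))"
  have G: "gain P r l \<pi> \<le> G" for \<pi> unfolding G_def by simp
  have "G \<in> range (gain P r l)" unfolding G_def by (rule Max_in) auto
  define sb where "sb \<pi> = (\<Sum>s\<in>UNIV. bias P r l \<pi> s)" for \<pi>
  have "Max (sb ` {\<pi>. gain P r l \<pi> = G}) \<in> sb ` {\<pi>. gain P r l \<pi> = G}"
    using \<open>G \<in> range (gain P r l)\<close> by (intro Max_in) auto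
  then obtain \<pi> where \<pi>: "gain P r l \<pi> = G" and "sb \<pi> = Max (sb ` {\<pi>. gain P r l \<pi> = G})"
    by auto
  then have \<pi>_max: "sb \<pi>' \<le> sb \<pi>" if "gain P r l \<pi>' = G" for \<pi>'
    using that by (simp add: Max_ge)
  have sc: "sign_consistent P r l \<pi>"
    by (rule sum_bias_max_sign_consistent[OF mdp uc]) (use G \<pi> \<pi>_max sb_def in auto)
  have "bias_optimal P r l \<pi>"
    unfolding bias_optimal_def gain_optimal_def
  proof (intro conjI allI impI)
    fix \<pi>' assume "\<forall>\<pi>''. gain P r l \<pi>'' \<le> gain P r l \<pi>'"
    then have "gain P r l \<pi>' = gain P r l \<pi>" using G[of \<pi>'] \<pi> by (metis antisym)
    then show "bias P r l \<pi>' s \<le> bias P r l \<pi> s" for s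
      by (rule bias_le_of_sum_bias_max[OF mdp uc sc]) (use \<pi> \<pi>_max sb_def in auto)
  qed (use G \<pi> in simp)
  then show thesis by (rule that)
qed

text \<open>Otherwise the policy following \<pi>2 where d is minimal and \<pi>1 elsewhere would have two
  disjoint closed sets of states, the minimisers and the maximisers of d.\<close>

lemma superharmonic_subharmonic_const:
  fixes P :: "bool \<Rightarrow> 's::finite \<Rightarrow> 's \<Rightarrow> real"
  assumes mdp: "is_mdp P" and uc: "unichain P"
    and super: "\<And>s. (\<Sum>t\<in>UNIV. pol_trans P \<pi>2 s t * d t) \<le> d s"
    and sub: "\<And>s. d s \<le> (\<Sum>t\<in>UNIV. pol_trans P \<pi>1 s t * d t)"
  shows "d s = d t"
proof -
  define m where "m = Min (range d)"
  define M where "M = Max (range d)"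
  have m: "m \<le> d t" and M: "d t \<le> M" for t unfolding m_def M_def by simp_all
  have "m \<in> range d" "M \<in> range d" unfolding m_def M_def by (auto intro: Min_in Max_in)
  then obtain smin smax where smin: "d smin = m" and smax: "d smax = M" by auto
  have "m = M"
  proof (rule ccontr)
    assume ne: "m \<noteq> M"
    define \<pi>3 where "\<pi>3 = {s. if d s = m then s \<in> \<pi>2 else s \<in> \<pi>1}"
    let ?Q3 = "pol_trans P \<pi>3"
    have closed_min: "t \<in> {s. d s = m}" if "s \<in> {s. d s = m}" "0 < ?Q3 s t" for s t
      using superharmonic_min_closed[OF stochastic_pol_trans[OF mdp] m _ super, of s t] that
      unfolding pol_trans_def \<pi>3_def by simp
    have closed_max: "t \<in> {s. d s = M}" if "s \<in> {s. d s = M}" "0 < ?Q3 s t" for s t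
      using subharmonic_max_closed[OF stochastic_pol_trans[OF mdp] M _ sub, of s t] that ne
      unfolding pol_trans_def \<pi>3_def by simp
    obtain u where u: "(smin, u) \<in> reach ?Q3" "recurrent ?Q3 u" by (rule ex_reachable_recurrent)
    obtain u' where u': "(smax, u') \<in> reach ?Q3" "recurrent ?Q3 u'" by (rule ex_reachable_recurrent)
    have "smin \<in> {s. d s = m}" "smax \<in> {s. d s = M}" using smin smax by simp_all
    then have u_min: "u \<in> {s. d s = m}" and u'_max: "u' \<in> {s. d s = M}"
      using reach_closed[OF closed_min u(1)] reach_closed[OF closed_max u'(1)] by simp_all
    have "(u, u') \<in> reach ?Q3"
      using single_recurrent_class_pol_trans[OF uc, of \<pi>3] u(2) u'(2)
      unfolding single_recurrent_class_def by blast
    then have "u' \<in> {s. d s = m}" using reach_closed[OF closed_min _ u_min] by simp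
    then show False using u'_max ne by simp
  qed
  then show ?thesis using m M by (metis antisym)
qed

lemma sign_consistent_bias_eq:
  fixes P :: "bool \<Rightarrow> 's::finite \<Rightarrow> 's \<Rightarrow> real"
  assumes mdp: "is_mdp P" and uc: "unichain P"
    and sc1: "sign_consistent P r l \<pi>1" and sc2: "sign_consistent P r l \<pi>2"
  obtains c where "\<And>s. bias P r l \<pi>1 s = bias P r l \<pi>2 s + c"
proof -
  let ?b1 = "bias P r l \<pi>1" and ?b2 = "bias P r l \<pi>2"
  define d where "d s = ?b1 s - ?b2 s" for s
  have geq: "gain P r l \<pi>1 = gain P r l \<pi>2"
    using sign_consistent_gain_optimal[OF mdp uc sc1, of \<pi>2]
      sign_consistent_gain_optimal[OF mdp uc sc2, of \<pi>1] by simp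
  have qdiff: "qvalue P r l a ?b1 s - qvalue P r l a ?b2 s = (\<Sum>t\<in>UNIV. P a s t * d t)" for a s
    unfolding qvalue_def d_def by (simp add: algebra_simps sum_subtractf)
  have "(\<Sum>t\<in>UNIV. pol_trans P \<pi>2 s t * d t) \<le> d s" for s
    using qdiff[of "s \<in> \<pi>2" s] sign_consistent_qvalue_le[OF mdp uc sc1, of "s \<in> \<pi>2" s]
      gain_bias_qvalue[OF mdp uc, of r l \<pi>2 s] geq
    unfolding pol_trans_def d_def by simp
  moreover have "d s \<le> (\<Sum>t\<in>UNIV. pol_trans P \<pi>1 s t * d t)" for s
    using qdiff[of "s \<in> \<pi>1" s] sign_consistent_qvalue_le[OF mdp uc sc2, of "s \<in> \<pi>1" s]
      gain_bias_qvalue[OF mdp uc, of r l \<pi>1 s] geq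
    unfolding pol_trans_def d_def by simp
  ultimately have "d s = d s0" for s s0 by (rule superharmonic_subharmonic_const[OF mdp uc])
  then have "?b1 s = ?b2 s + d undefined" for s unfolding d_def by (metis diff_add_cancel add.commute)
  then show thesis by (rule that)
qed

lemma opt_adv_eq_adv:
  fixes P :: "bool \<Rightarrow> 's::finite \<Rightarrow> 's \<Rightarrow> real"
  assumes mdp: "is_mdp P" and uc: "unichain P" and sc: "sign_consistent P r l \<pi>"
  shows "opt_adv P r l s = adv P r l \<pi> s"
proof -
  obtain \<pi>0 where "bias_optimal P r l \<pi>0" using ex_bias_optimal[OF mdp uc] .
  then have bo: "bias_optimal P r l (SOME \<pi>. bias_optimal P r l \<pi>)" by (rule someI)
  obtain c where "\<And>t. bias P r l (SOME \<pi>. bias_optimal P r l \<pi>) t = bias P r l \<pi> t + c"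
    using sign_consistent_bias_eq[OF mdp uc bias_optimal_sign_consistent[OF mdp uc bo] sc] by blast
  then have "bias P r l (SOME \<pi>. bias_optimal P r l \<pi>) = (\<lambda>t. bias P r l \<pi> t + c)" by auto
  then show ?thesis
    unfolding opt_adv_def adv_def adv_wrt_def[symmetric] using adv_wrt_shift[OF mdp] by simp
qed

lemma ex_sign_consistent:
  assumes "is_mdp P" and "unichain P"
  obtains \<pi> where "sign_consistent P r l \<pi>"
  using ex_bias_optimal[OF assms] bias_optimal_sign_consistent[OF assms] by metis

definition adv_slope ::
  "(bool \<Rightarrow> 's::finite \<Rightarrow> 's \<Rightarrow> real) \<Rightarrow> (bool \<Rightarrow> 's \<Rightarrow> real) \<Rightarrow> 's set \<Rightarrow> 's \<Rightarrow> real" where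
  "adv_slope P r \<pi> s = adv P r 1 \<pi> s - adv P r 0 \<pi> s"

lemma adv_affine:
  fixes P :: "bool \<Rightarrow> 's::finite \<Rightarrow> 's \<Rightarrow> real"
  assumes mdp: "is_mdp P" and uc: "unichain P"
  shows "adv P r l \<pi> s = adv P r 0 \<pi> s + l * adv_slope P r \<pi> s"
proof -
  let ?b0 = "bias P r 0 \<pi>" and ?b1 = "bias P r 1 \<pi>"
  have "(\<lambda>s. (1 - l) * pol_rew r 0 \<pi> s + l * pol_rew r 1 \<pi> s) = pol_rew r l \<pi>"
    by (auto simp: pol_rew_def fun_eq_iff algebra_simps)
  then have "poisson (pol_trans P \<pi>) (pol_rew r l \<pi>) ((1 - l) * gain P r 0 \<pi> + l * gain P r 1 \<pi>)
      (\<lambda>s. (1 - l) * ?b0 s + l * ?b1 s)"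
    using poisson_lin[OF poisson_gain_bias[OF mdp uc, where \<pi>=\<pi> and r=r and l=0]
        poisson_gain_bias[OF mdp uc, where \<pi>=\<pi> and r=r and l=1], where x="1 - l" and y=l]
    by simp
  then have "adv P r l \<pi> s = adv_wrt P r l (\<lambda>s. (1 - l) * ?b0 s + l * ?b1 s) s"
    by (rule adv_eq_adv_wrt[OF mdp uc])
  also have "\<dots> = (1 - l) * adv_wrt P r 0 ?b0 s + l * adv_wrt P r 1 ?b1 s"
  proof -
    let ?D = "\<lambda>t. P True s t - P False s t"
    have "(\<Sum>t\<in>UNIV. ?D t * ((1 - l) * ?b0 t + l * ?b1 t))
        = (\<Sum>t\<in>UNIV. (1 - l) * (?D t * ?b0 t) + l * (?D t * ?b1 t))"
      by (rule sum.cong) (simp_all add: algebra_simps)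
    also have "\<dots> = (1 - l) * (\<Sum>t\<in>UNIV. ?D t * ?b0 t) + l * (\<Sum>t\<in>UNIV. ?D t * ?b1 t)"
      by (simp add: sum.distrib sum_distrib_left)
    finally show ?thesis unfolding adv_wrt_def by (simp add: algebra_simps)
  qed
  finally show ?thesis unfolding adv_slope_def adv_def adv_wrt_def[symmetric] by (simp add: algebra_simps)
qed

text \<open>Under the policies activating every state or none, the bias does not depend on the penalty.\<close>

lemma adv_UNIV:
  assumes mdp: "is_mdp P" and uc: "unichain P"
  shows "adv P r l UNIV s = adv P r 0 UNIV s - l"
proof -
  have "poisson (pol_trans P UNIV) (pol_rew r l UNIV) (gain P r 0 UNIV - l) (bias P r 0 UNIV)"
    using poisson_gain_bias[OF mdp uc, where \<pi>=UNIV and r=r and l=0] unfolding poisson_def pol_rew_def by simp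
  then show ?thesis
    using adv_eq_adv_wrt[OF mdp uc] unfolding adv_def adv_wrt_def[symmetric] by (simp add: adv_wrt_def)
qed

lemma adv_empty:
  assumes mdp: "is_mdp P" and uc: "unichain P"
  shows "adv P r l {} s = adv P r 0 {} s - l"
proof -
  have "poisson (pol_trans P {}) (pol_rew r l {}) (gain P r 0 {}) (bias P r 0 {})"
    using poisson_gain_bias[OF mdp uc, where \<pi>="{}" and r=r and l=0] unfolding poisson_def pol_rew_def by simp
  then show ?thesis
    using adv_eq_adv_wrt[OF mdp uc] unfolding adv_def adv_wrt_def[symmetric] by (simp add: adv_wrt_def)
qed

text \<open>Flipping an indifferent state leaves gain and bias unchanged.\<close>

lemma adv_flip_indifferent:
  assumes mdp: "is_mdp P" and uc: "unichain P" and zero: "adv P r l \<pi> s0 = 0"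
  shows "adv P r l (flip \<pi> s0) t = adv P r l \<pi> t"
proof -
  let ?g = "gain P r l \<pi>" and ?b = "bias P r l \<pi>"
  have indiff: "qvalue P r l True ?b s0 = qvalue P r l False ?b s0"
    using zero unfolding adv_def adv_wrt_def[symmetric] adv_wrt_qvalue by simp
  have "?g + ?b s = qvalue P r l (s \<in> flip \<pi> s0) ?b s" for s
    using gain_bias_qvalue[OF mdp uc, of r l \<pi> s] indiff unfolding mem_flip
    by (cases "s = s0"; cases "s0 \<in> \<pi>") simp_all
  then have "poisson (pol_trans P (flip \<pi> s0)) (pol_rew r l (flip \<pi> s0)) ?g ?b"
    unfolding poisson_iff_qvalue by blast
  then show ?thesis using adv_eq_adv_wrt[OF mdp uc] unfolding adv_def adv_wrt_def[symmetric] by simp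
qed

section \<open>Perturbation of the transition kernels\<close>

lemma same_support_unichain:
  assumes ss: "same_support P Ph" and uc: "unichain P"
  shows "unichain Ph"
proof -
  have "{(s, t). 0 < pol_trans Ph \<pi> s t} = {(s, t). 0 < pol_trans P \<pi> s t}" for \<pi>
    using ss unfolding same_support_def pol_trans_def by blast
  then have "reach (pol_trans Ph \<pi>) = reach (pol_trans P \<pi>)" for \<pi> unfolding reach_def by simp
  then have "single_recurrent_class (pol_trans Ph \<pi>) = single_recurrent_class (pol_trans P \<pi>)" for \<pi>
    unfolding single_recurrent_class_def recurrent_def by presburger
  then show ?thesis using uc unfolding unichain_def by blast
qed

lemma row_dist_le_mdp_dist:
  fixes P Ph :: "bool \<Rightarrow> 's::finite \<Rightarrow> 's \<Rightarrow> real"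
  shows "(\<Sum>t\<in>UNIV. \<bar>P a s t - Ph a s t\<bar>) \<le> mdp_dist P Ph"
proof -
  have eq: "{(\<Sum>t\<in>UNIV. \<bar>P a s t - Ph a s t\<bar>) | a s. True}
      = (\<lambda>(a, s). \<Sum>t\<in>UNIV. \<bar>P a s t - Ph a s t\<bar>) ` UNIV"
    by auto
  show ?thesis unfolding mdp_dist_def eq by (rule Max_ge) auto
qed

lemma mdp_dist_nonneg: "0 \<le> mdp_dist (P :: bool \<Rightarrow> 's::finite \<Rightarrow> 's \<Rightarrow> real) Ph"
  by (rule order_trans[OF sum_nonneg row_dist_le_mdp_dist]) simp

lemma sum_abs_mult_le:
  fixes f v :: "'s::finite \<Rightarrow> real"
  assumes "\<And>t. \<bar>v t\<bar> \<le> V"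
  shows "\<bar>\<Sum>t\<in>UNIV. f t * v t\<bar> \<le> (\<Sum>t\<in>UNIV. \<bar>f t\<bar>) * V"
proof -
  have "\<bar>\<Sum>t\<in>UNIV. f t * v t\<bar> \<le> (\<Sum>t\<in>UNIV. \<bar>f t\<bar> * \<bar>v t\<bar>)"
    by (rule order_trans[OF sum_abs]) (simp add: abs_mult)
  also have "\<dots> \<le> (\<Sum>t\<in>UNIV. \<bar>f t\<bar> * V)" using assms by (intro sum_mono mult_left_mono) auto
  finally show ?thesis by (simp add: sum_distrib_right)
qed

lemma poisson_exists_normalised:
  fixes Q :: "'s::finite \<Rightarrow> 's \<Rightarrow> real"
  assumes Q: "stochastic Q" and src: "single_recurrent_class Q"
  obtains g b where "poisson Q rr g b" and "b s0 = 0"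
proof -
  obtain g b where "poisson Q rr g b" using poisson_exists[OF Q src] .
  then have "poisson Q rr g (\<lambda>s. b s + - b s0)" by (rule poisson_shift[OF Q])
  then show thesis using that by simp
qed

text \<open>The normalised bias is a fixed linear image of the reward.\<close>

lemma poisson_solution_bound:
  fixes Q :: "'s::finite \<Rightarrow> 's \<Rightarrow> real"
  assumes Q: "stochastic Q" and src: "single_recurrent_class Q"
  obtains K where "0 \<le> K"
    and "\<And>y g b Y u. poisson Q y g b \<Longrightarrow> b s0 = 0 \<Longrightarrow> (\<And>s. \<bar>y s\<bar> \<le> Y) \<Longrightarrow> \<bar>b u\<bar> \<le> K * Y"
proof -
  obtain G B where rep: "\<And>rr. poisson Q rr (\<Sum>t\<in>UNIV. rr t * G t) (\<lambda>s. \<Sum>t\<in>UNIV. rr t * B t s)"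
    using poisson_basis[OF Q src] by blast
  define K where "K = (\<Sum>u\<in>UNIV. \<Sum>t\<in>UNIV. \<bar>B t u - B t s0\<bar>)"
  have "0 \<le> K" unfolding K_def by (simp add: sum_nonneg)
  moreover have "\<bar>b u\<bar> \<le> K * Y"
    if p: "poisson Q y g b" and b0: "b s0 = 0" and y: "\<And>s. \<bar>y s\<bar> \<le> Y" for y g b Y u
  proof -
    have "b u = (\<Sum>t\<in>UNIV. y t * B t u) + (b s0 - (\<Sum>t\<in>UNIV. y t * B t s0))"
      using conjunct2[OF poisson_unique[OF Q src p rep[of y], of s0]] by (rule spec)
    also have "\<dots> = (\<Sum>t\<in>UNIV. y t * B t u - y t * B t s0)" unfolding b0 by (simp add: sum_subtractf)
    also have "\<dots> = (\<Sum>t\<in>UNIV. (B t u - B t s0) * y t)" by (rule sum.cong) (simp_all add: algebra_simps)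
    finally have "b u = (\<Sum>t\<in>UNIV. (B t u - B t s0) * y t)" .
    then have "\<bar>b u\<bar> \<le> (\<Sum>t\<in>UNIV. \<bar>B t u - B t s0\<bar>) * Y" using sum_abs_mult_le[where v=y, OF y] by simp
    also have "\<dots> \<le> K * Y"
    proof (rule mult_right_mono)
      show "(\<Sum>t\<in>UNIV. \<bar>B t u - B t s0\<bar>) \<le> K"
        unfolding K_def by (rule member_le_sum[where f="\<lambda>u. \<Sum>t\<in>UNIV. \<bar>B t u - B t s0\<bar>"]) (simp_all add: sum_nonneg)
      show "0 \<le> Y" using y[of s0] by (meson abs_ge_zero order_trans)
    qed
    finally show ?thesis .
  qed
  ultimately show thesis by (rule that)
qed

lemma poisson_kernel_difference:
  assumes "poisson Qh rr gh bh" and "poisson Q rr g b"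
  shows "poisson Q (\<lambda>s. \<Sum>t\<in>UNIV. (Qh s t - Q s t) * bh t) (gh - g) (\<lambda>s. bh s - b s)"
  unfolding poisson_def
proof
  fix s
  have eqs: "gh + bh s = rr s + (\<Sum>t\<in>UNIV. Qh s t * bh t)" "g + b s = rr s + (\<Sum>t\<in>UNIV. Q s t * b t)"
    using assms unfolding poisson_def by blast+
  have "(\<Sum>t\<in>UNIV. (Qh s t - Q s t) * bh t) + (\<Sum>t\<in>UNIV. Q s t * (bh t - b t))
      = (\<Sum>t\<in>UNIV. (Qh s t - Q s t) * bh t + Q s t * (bh t - b t))"
    by (simp add: sum.distrib)
  also have "\<dots> = (\<Sum>t\<in>UNIV. Qh s t * bh t - Q s t * b t)"
    by (rule sum.cong) (simp_all add: algebra_simps)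
  finally show "gh - g + (bh s - b s)
      = (\<Sum>t\<in>UNIV. (Qh s t - Q s t) * bh t) + (\<Sum>t\<in>UNIV. Q s t * (bh t - b t))"
    using eqs by (simp add: sum_subtractf)
qed

text \<open>The error e = bh - b solves the Poisson equation of Q with a reward of size
  \<epsilon> (|b| + |e|); for small \<epsilon> the resulting bound on |e| can be solved for |e|.\<close>

lemma poisson_perturbation_bound:
  fixes Q Qh :: "'s::finite \<Rightarrow> 's \<Rightarrow> real"
  assumes bound: "\<And>y g b Y u. poisson Q y g b \<Longrightarrow> b s0 = 0 \<Longrightarrow> (\<And>s. \<bar>y s\<bar> \<le> Y) \<Longrightarrow> \<bar>b u\<bar> \<le> K * Y"
    and p: "poisson Q rr g b" and b0: "b s0 = 0" and ph: "poisson Qh rr gh bh" and bh0: "bh s0 = 0"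
    and rows: "\<And>s. (\<Sum>t\<in>UNIV. \<bar>Qh s t - Q s t\<bar>) \<le> \<epsilon>"
    and small: "real CARD('s) * K * \<epsilon> \<le> 1 / 2"
  shows "\<bar>bh u - b u\<bar> \<le> 2 * real CARD('s) * K * (\<Sum>t\<in>UNIV. \<bar>b t\<bar>) * \<epsilon>"
proof -
  define n where "n = real CARD('s)"
  define Bm where "Bm = (\<Sum>u\<in>UNIV. \<bar>b u\<bar>)"
  define e where "e u = bh u - b u" for u
  define E where "E = (\<Sum>u\<in>UNIV. \<bar>e u\<bar>)"
  have e_E: "\<bar>e u\<bar> \<le> E" for u unfolding E_def by (rule member_le_sum) auto
  have bh_bound: "\<bar>bh t\<bar> \<le> Bm + E" for t
    using e_E[of t] member_le_sum[of t UNIV "\<lambda>u. \<bar>b u\<bar>"] unfolding Bm_def e_def by simp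
  define y where "y s = (\<Sum>t\<in>UNIV. (Qh s t - Q s t) * bh t)" for s
  have pe: "poisson Q y (gh - g) e"
    unfolding y_def e_def by (rule poisson_kernel_difference[OF ph p])
  have y_bound: "\<bar>y s\<bar> \<le> \<epsilon> * (Bm + E)" for s
  proof -
    have "0 \<le> Bm + E" unfolding Bm_def E_def by (simp add: sum_nonneg)
    then have "(\<Sum>t\<in>UNIV. \<bar>Qh s t - Q s t\<bar>) * (Bm + E) \<le> \<epsilon> * (Bm + E)"
      by (rule mult_right_mono[OF rows])
    then show ?thesis using sum_abs_mult_le[where v=bh, OF bh_bound] unfolding y_def by (meson order_trans)
  qed
  have "\<bar>e u\<bar> \<le> K * (\<epsilon> * (Bm + E))" for u
    by (rule bound[OF pe _ y_bound]) (simp add: e_def bh0 b0)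
  then have "E \<le> (\<Sum>u::'s\<in>UNIV. K * (\<epsilon> * (Bm + E)))" unfolding E_def by (rule sum_mono)
  then have E_le: "E \<le> n * K * \<epsilon> * Bm + n * K * \<epsilon> * E" unfolding n_def by (simp add: algebra_simps)
  have "n * K * \<epsilon> * E \<le> 1 / 2 * E"
    using small unfolding n_def by (rule mult_right_mono) (simp add: E_def sum_nonneg)
  with E_le have "E \<le> 2 * (n * K * \<epsilon> * Bm)" by linarith
  then show ?thesis using e_E[of u] unfolding e_def n_def Bm_def by (simp add: algebra_simps)
qed

lemma poisson_perturbation:
  fixes Q :: "'s::finite \<Rightarrow> 's \<Rightarrow> real"
  assumes Q: "stochastic Q" and src: "single_recurrent_class Q"
    and p: "poisson Q rr g b" and b0: "b s0 = 0"
  obtains \<epsilon>0 C where "0 < \<epsilon>0"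
    and "\<And>Qh gh bh \<epsilon> u. poisson Qh rr gh bh \<Longrightarrow> bh s0 = 0 \<Longrightarrow> \<epsilon> \<le> \<epsilon>0 \<Longrightarrow>
          (\<And>s. (\<Sum>t\<in>UNIV. \<bar>Qh s t - Q s t\<bar>) \<le> \<epsilon>) \<Longrightarrow> \<bar>bh u - b u\<bar> \<le> C * \<epsilon>"
proof -
  obtain K where K: "0 \<le> K"
    and bound: "\<And>y g b Y u. poisson Q y g b \<Longrightarrow> b s0 = 0 \<Longrightarrow> (\<And>s. \<bar>y s\<bar> \<le> Y) \<Longrightarrow> \<bar>b u\<bar> \<le> K * Y"
    using poisson_solution_bound[OF Q src] by blast
  define n where "n = real CARD('s)"
  define \<epsilon>0 where "\<epsilon>0 = 1 / (2 * (n * K + 1))"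
  have nK: "0 \<le> n * K" unfolding n_def using K by simp
  have small: "n * K * \<epsilon> \<le> 1 / 2" if "\<epsilon> \<le> \<epsilon>0" for \<epsilon>
  proof -
    have "n * K * \<epsilon> \<le> n * K * \<epsilon>0" using mult_left_mono[OF that nK] by simp
    also have "\<dots> \<le> 1 / 2" unfolding \<epsilon>0_def using nK by (simp add: field_simps)
    finally show ?thesis .
  qed
  have "0 < \<epsilon>0" unfolding \<epsilon>0_def using nK by simp
  then show thesis
  proof (rule that)
    fix Qh gh bh \<epsilon> u
    assume "poisson Qh rr gh bh" "bh s0 = 0" "\<epsilon> \<le> \<epsilon>0" "\<And>s. (\<Sum>t\<in>UNIV. \<bar>Qh s t - Q s t\<bar>) \<le> \<epsilon>"
    then show "\<bar>bh u - b u\<bar> \<le> 2 * n * K * (\<Sum>t\<in>UNIV. \<bar>b t\<bar>) * \<epsilon>"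
      unfolding n_def
    proof (intro poisson_perturbation_bound[of Q s0 K rr g b Qh gh bh \<epsilon> u])
      show "\<And>y g b Y u. poisson Q y g b \<Longrightarrow> b s0 = 0 \<Longrightarrow> (\<And>s. \<bar>y s\<bar> \<le> Y) \<Longrightarrow> \<bar>b u\<bar> \<le> K * Y"
        by (rule bound)
    qed (use p b0 small[unfolded n_def] in simp_all)
  qed
qed

lemma adv_wrt_perturbation:
  fixes P Ph :: "bool \<Rightarrow> 's::finite \<Rightarrow> 's \<Rightarrow> real"
  assumes mdp: "is_mdp P" and rows: "\<And>a. (\<Sum>t\<in>UNIV. \<bar>Ph a x t - P a x t\<bar>) \<le> \<epsilon>"
    and bh: "\<And>t. \<bar>bh t\<bar> \<le> B" and diff: "\<And>t. \<bar>bh t - b t\<bar> \<le> D"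
  shows "\<bar>adv_wrt Ph r l bh x - adv_wrt P r l b x\<bar> \<le> 2 * (\<epsilon> * B) + 2 * D"
proof -
  have "adv_wrt Ph r l bh x - adv_wrt P r l b x
      = (\<Sum>t\<in>UNIV. (Ph True x t - Ph False x t) * bh t - (P True x t - P False x t) * b t)"
    unfolding adv_wrt_def by (simp add: sum_subtractf)
  also have "\<dots> = (\<Sum>t\<in>UNIV. ((Ph True x t - P True x t) * bh t - (Ph False x t - P False x t) * bh t)
      + (P True x t - P False x t) * (bh t - b t))"
    by (rule sum.cong) (simp_all add: algebra_simps)
  finally have split: "adv_wrt Ph r l bh x - adv_wrt P r l b x
      = (\<Sum>t\<in>UNIV. (Ph True x t - P True x t) * bh t) - (\<Sum>t\<in>UNIV. (Ph False x t - P False x t) * bh t)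
        + (\<Sum>t\<in>UNIV. (P True x t - P False x t) * (bh t - b t))"
    by (simp add: sum.distrib sum_subtractf)
  have row_terms: "\<bar>\<Sum>t\<in>UNIV. (Ph a x t - P a x t) * bh t\<bar> \<le> \<epsilon> * B" for a
  proof -
    have "0 \<le> B" using bh[of x] by (meson abs_ge_zero order_trans)
    with rows[of a] have "(\<Sum>t\<in>UNIV. \<bar>Ph a x t - P a x t\<bar>) * B \<le> \<epsilon> * B" by (rule mult_right_mono)
    then show ?thesis using sum_abs_mult_le[where v=bh, OF bh] by (meson order_trans)
  qed
  have "(\<Sum>t\<in>UNIV. \<bar>P True x t - P False x t\<bar>) \<le> (\<Sum>t\<in>UNIV. P True x t + P False x t)"
    using mdp unfolding is_mdp_def by (intro sum_mono) (simp add: abs_le_iff add_increasing)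
  then have "(\<Sum>t\<in>UNIV. \<bar>P True x t - P False x t\<bar>) \<le> 2"
    using mdp unfolding is_mdp_def by (simp add: sum.distrib)
  moreover have "0 \<le> D" using diff[of x] by (meson abs_ge_zero order_trans)
  ultimately have "(\<Sum>t\<in>UNIV. \<bar>P True x t - P False x t\<bar>) * D \<le> 2 * D" by (rule mult_right_mono)
  then have "\<bar>\<Sum>t\<in>UNIV. (P True x t - P False x t) * (bh t - b t)\<bar> \<le> 2 * D"
    using sum_abs_mult_le[where v="\<lambda>t. bh t - b t", OF diff] by (meson order_trans)
  then show ?thesis unfolding split using row_terms[of True] row_terms[of False] by linarith
qed

lemma adv_lipschitz:
  fixes P :: "bool \<Rightarrow> 's::finite \<Rightarrow> 's \<Rightarrow> real"
  assumes mdp: "is_mdp P" and uc: "unichain P"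
  obtains \<epsilon>0 C where "0 < \<epsilon>0"
    and "\<And>Ph. is_mdp Ph \<Longrightarrow> unichain Ph \<Longrightarrow> mdp_dist P Ph \<le> \<epsilon>0 \<Longrightarrow>
           \<bar>adv Ph r l \<pi> x - adv P r l \<pi> x\<bar> \<le> C * mdp_dist P Ph"
proof -
  fix s0 :: 's
  let ?Q = "pol_trans P \<pi>" and ?R = "pol_rew r l \<pi>"
  have Q: "stochastic ?Q" and src: "single_recurrent_class ?Q"
    using stochastic_pol_trans[OF mdp] single_recurrent_class_pol_trans[OF uc] .
  obtain g b where p: "poisson ?Q ?R g b" and b0: "b s0 = 0"
    using poisson_exists_normalised[OF Q src] by blast
  obtain \<epsilon>0 C1 where \<epsilon>0: "0 < \<epsilon>0"
    and close: "\<And>Qh gh bh \<epsilon> u. poisson Qh ?R gh bh \<Longrightarrow> bh s0 = 0 \<Longrightarrow> \<epsilon> \<le> \<epsilon>0 \<Longrightarrow>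
          (\<And>s. (\<Sum>t\<in>UNIV. \<bar>Qh s t - ?Q s t\<bar>) \<le> \<epsilon>) \<Longrightarrow> \<bar>bh u - b u\<bar> \<le> C1 * \<epsilon>"
    using poisson_perturbation[OF Q src p b0] by blast
  define B where "B = (\<Sum>u\<in>UNIV. \<bar>b u\<bar>) + \<bar>C1\<bar> * \<epsilon>0"
  have "\<bar>adv Ph r l \<pi> x - adv P r l \<pi> x\<bar> \<le> (2 * B + 2 * \<bar>C1\<bar>) * mdp_dist P Ph"
    if mdph: "is_mdp Ph" and uch: "unichain Ph" and le: "mdp_dist P Ph \<le> \<epsilon>0" for Ph
  proof -
    let ?\<epsilon> = "mdp_dist P Ph"
    obtain gh bh where ph: "poisson (pol_trans Ph \<pi>) ?R gh bh" and bh0: "bh s0 = 0"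
      using poisson_exists_normalised[OF stochastic_pol_trans[OF mdph]
          single_recurrent_class_pol_trans[OF uch]] by blast
    have rows: "(\<Sum>t\<in>UNIV. \<bar>Ph a s t - P a s t\<bar>) \<le> ?\<epsilon>" for a s
      using row_dist_le_mdp_dist[where P=P and Ph=Ph and a=a and s=s] by (simp add: abs_minus_commute)
    have "\<bar>bh u - b u\<bar> \<le> C1 * ?\<epsilon>" for u
      by (rule close[OF ph bh0 le]) (use rows in \<open>simp add: pol_trans_def\<close>)
    then have diff: "\<bar>bh u - b u\<bar> \<le> \<bar>C1\<bar> * ?\<epsilon>" for u
      by (meson abs_ge_self mdp_dist_nonneg mult_right_mono order_trans)
    have "\<bar>C1\<bar> * ?\<epsilon> \<le> \<bar>C1\<bar> * \<epsilon>0" using le by (simp add: mult_left_mono)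
    then have bh: "\<bar>bh u\<bar> \<le> B" for u
      using diff[of u] member_le_sum[of u UNIV "\<lambda>u. \<bar>b u\<bar>"] unfolding B_def by simp
    have "\<bar>adv Ph r l \<pi> x - adv P r l \<pi> x\<bar> \<le> 2 * (?\<epsilon> * B) + 2 * (\<bar>C1\<bar> * ?\<epsilon>)"
      unfolding adv_eq_adv_wrt[OF mdph uch ph] adv_eq_adv_wrt[OF mdp uc p]
      by (rule adv_wrt_perturbation[OF mdp rows bh diff])
    then show ?thesis by (simp add: algebra_simps)
  qed
  then show thesis using that[OF \<epsilon>0] by blast
qed

definition support_nhds :: "(bool \<Rightarrow> 's::finite \<Rightarrow> 's \<Rightarrow> real) \<Rightarrow> (bool \<Rightarrow> 's \<Rightarrow> 's \<Rightarrow> real) filter" where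
  "support_nhds P =
     inf (filtercomap (mdp_dist P) (nhds 0)) (principal {Ph. is_mdp Ph \<and> same_support P Ph})"

lemma eventually_support_nhds:
  "eventually G (support_nhds P) \<longleftrightarrow>
     (\<exists>\<delta>>0. \<forall>Ph. is_mdp Ph \<and> same_support P Ph \<and> mdp_dist P Ph \<le> \<delta> \<longrightarrow> G Ph)"
  unfolding support_nhds_def eventually_inf_principal eventually_filtercomap eventually_nhds_metric_le
  using mdp_dist_nonneg[of P] by (auto simp: dist_real_def)

lemma tendsto_adv_support_nhds:
  assumes mdp: "is_mdp P" and uc: "unichain P"
  shows "((\<lambda>Ph. adv Ph r l \<pi> x) \<longlongrightarrow> adv P r l \<pi> x) (support_nhds P)"
proof -
  obtain \<epsilon>0 C where "0 < \<epsilon>0"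
    and lip: "\<And>Ph. is_mdp Ph \<Longrightarrow> unichain Ph \<Longrightarrow> mdp_dist P Ph \<le> \<epsilon>0 \<Longrightarrow>
           \<bar>adv Ph r l \<pi> x - adv P r l \<pi> x\<bar> \<le> C * mdp_dist P Ph"
    using adv_lipschitz[OF mdp uc] by blast
  then have "eventually (\<lambda>Ph. norm (adv Ph r l \<pi> x - adv P r l \<pi> x) \<le> C * mdp_dist P Ph) (support_nhds P)"
    unfolding eventually_support_nhds using same_support_unichain[OF _ uc] by auto
  moreover have "(mdp_dist P \<longlongrightarrow> 0) (support_nhds P)"
    unfolding support_nhds_def by (rule tendsto_mono[OF inf_le1 filterlim_filtercomap])
  then have "((\<lambda>Ph. C * mdp_dist P Ph) \<longlongrightarrow> 0) (support_nhds P)" by (rule tendsto_mult_right_zero)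
  ultimately have "((\<lambda>Ph. adv Ph r l \<pi> x - adv P r l \<pi> x) \<longlongrightarrow> 0) (support_nhds P)"
    by (rule Lim_null_comparison)
  then show ?thesis by (rule LIM_zero_cancel)
qed

section \<open>Threshold policies and Whittle indices\<close>

lemma affine_pos_between:
  fixes a \<sigma> x y1 y2 :: real
  assumes "0 < a + y1 * \<sigma>" and "0 \<le> a + y2 * \<sigma>" and "y1 \<le> x" and "x < y2"
  shows "0 < a + x * \<sigma>"
proof (cases "0 \<le> \<sigma>")
  case True
  then have "y1 * \<sigma> \<le> x * \<sigma>" using assms(3) by (simp add: mult_right_mono)
  then show ?thesis using assms(1) by linarith
next
  case False
  then have "y2 * \<sigma> < x * \<sigma>" using assms(4) by (simp add: mult_strict_right_mono_neg)
  then show ?thesis using assms(2) by linarith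
qed

lemma affine_neg_between_left:
  fixes a \<sigma> x y1 y2 :: real
  assumes "a + y1 * \<sigma> < 0" and "a + y2 * \<sigma> \<le> 0" and "y1 \<le> x" and "x < y2"
  shows "a + x * \<sigma> < 0"
proof (cases "0 \<le> \<sigma>")
  case True
  then have "x * \<sigma> \<le> y2 * \<sigma>" using assms(4) by (simp add: mult_right_mono)
  moreover have "x * \<sigma> < y2 * \<sigma> \<or> x * \<sigma> \<le> y1 * \<sigma>"
    using True assms(3,4) by (cases "\<sigma> = 0") (auto simp: mult_strict_right_mono)
  ultimately show ?thesis using assms(1,2) by linarith
next
  case False
  then have "x * \<sigma> \<le> y1 * \<sigma>" using assms(3) by (simp add: mult_right_mono_neg)
  then show ?thesis using assms(1) by linarith
qed

lemma affine_neg_between_right: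
  fixes a \<sigma> x y1 y2 :: real
  assumes "a + y1 * \<sigma> \<le> 0" and "a + y2 * \<sigma> < 0" and "y1 < x" and "x \<le> y2"
  shows "a + x * \<sigma> < 0"
proof (cases "0 \<le> \<sigma>")
  case True
  then have "x * \<sigma> \<le> y2 * \<sigma>" using assms(4) by (simp add: mult_right_mono)
  then show ?thesis using assms(2) by linarith
next
  case False
  then have "x * \<sigma> < y1 * \<sigma>" using assms(3) by (simp add: mult_strict_right_mono_neg)
  then show ?thesis using assms(1) by linarith
qed

lemma sign_consistent_limit:
  fixes P :: "bool \<Rightarrow> 's::finite \<Rightarrow> 's \<Rightarrow> real"
  assumes mdp: "is_mdp P" and uc: "unichain P"
    and F: "((\<lambda>x. x) \<longlongrightarrow> c) F" "F \<noteq> bot"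
    and ev: "eventually (\<lambda>x. sign_consistent P r x \<pi>) F"
  shows "sign_consistent P r c \<pi>"
  unfolding sign_consistent_def
proof (intro allI conjI impI)
  fix s
  have "((\<lambda>x. adv P r 0 \<pi> s + x * adv_slope P r \<pi> s) \<longlongrightarrow> adv P r 0 \<pi> s + c * adv_slope P r \<pi> s) F"
    by (intro tendsto_intros F)
  then have lim: "((\<lambda>x. adv P r x \<pi> s) \<longlongrightarrow> adv P r c \<pi> s) F"
    unfolding adv_affine[OF mdp uc, symmetric] .
  show "0 \<le> adv P r c \<pi> s" if "s \<in> \<pi>"
    using ev that by (intro tendsto_lowerbound[OF lim _ F(2)]) (auto elim: eventually_mono simp: sign_consistent_def)
  show "adv P r c \<pi> s \<le> 0" if "s \<notin> \<pi>"
    using ev that by (intro tendsto_upperbound[OF lim _ F(2)]) (auto elim: eventually_mono simp: sign_consistent_def)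
qed

text \<open>The sign pattern of the advantages at penalty x that makes each state t have index lh t.\<close>

definition adv_sign_pattern ::
  "(bool \<Rightarrow> 's::finite \<Rightarrow> 's \<Rightarrow> real) \<Rightarrow> (bool \<Rightarrow> 's \<Rightarrow> real) \<Rightarrow> ('s \<Rightarrow> real) \<Rightarrow> real \<Rightarrow> 's set \<Rightarrow> bool" where
  "adv_sign_pattern P r lh x \<pi> \<longleftrightarrow> (\<forall>t. (x < lh t \<longrightarrow> 0 < adv P r x \<pi> t) \<and>
     (lh t < x \<longrightarrow> adv P r x \<pi> t < 0) \<and> (lh t = x \<longrightarrow> adv P r x \<pi> t = 0))"

lemma adv_sign_pattern_whittle_index:
  fixes P :: "bool \<Rightarrow> 's::finite \<Rightarrow> 's \<Rightarrow> real"
  assumes mdp: "is_mdp P" and uc: "unichain P"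
    and pattern: "\<And>x. adv_sign_pattern P r lh x {s. x < lh s}"
  shows "is_whittle_index P r t (lh t)"
proof -
  have "sign_consistent P r x {s. x < lh s}" for x
    using pattern[of x] unfolding adv_sign_pattern_def sign_consistent_def
    by (metis linorder_neqE_linordered_idom mem_Collect_eq order.refl order.strict_implies_order)
  then have "opt_adv P r x t = adv P r x {s. x < lh s} t" for x by (rule opt_adv_eq_adv[OF mdp uc])
  then show ?thesis using pattern unfolding is_whittle_index_def adv_sign_pattern_def by simp
qed

text \<open>A certificate that lh are Whittle indices: at penalty lh u, the states ranked at least as
  high as u by lam form an optimal policy in which u is indifferent and all other states strictly
  prefer their action.\<close>

definition threshold_indices ::
  "(bool \<Rightarrow> 's::finite \<Rightarrow> 's \<Rightarrow> real) \<Rightarrow> (bool \<Rightarrow> 's \<Rightarrow> real) \<Rightarrow> ('s \<Rightarrow> real) \<Rightarrow> ('s \<Rightarrow> real) \<Rightarrow> bool" where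
  "threshold_indices P r lam lh \<longleftrightarrow>
     (\<forall>u t. lam u < lam t \<longrightarrow> lh u < lh t) \<and>
     (\<forall>u. adv P r (lh u) {s. lam u \<le> lam s} u = 0) \<and>
     (\<forall>u t. lam u < lam t \<longrightarrow> 0 < adv P r (lh u) {s. lam u \<le> lam s} t) \<and>
     (\<forall>u t. lam t < lam u \<longrightarrow> adv P r (lh u) {s. lam u \<le> lam s} t < 0)"

lemma threshold_indicesD:
  assumes "threshold_indices P r lam lh"
  shows "lam u < lam t \<Longrightarrow> lh u < lh t"
    and "adv P r (lh u) {s. lam u \<le> lam s} u = 0"
    and "lam u < lam t \<Longrightarrow> 0 < adv P r (lh u) {s. lam u \<le> lam s} t"
    and "lam t < lam u \<Longrightarrow> adv P r (lh u) {s. lam u \<le> lam s} t < 0"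
  using assms unfolding threshold_indices_def by auto

lemma threshold_indices_reindex:
  assumes "inj lam" and th: "threshold_indices P r lam lh"
  shows "inj lh" and "threshold_indices P r lh lh"
proof -
  have less: "lh s < lh t \<longleftrightarrow> lam s < lam t" for s t
    using th \<open>inj lam\<close> unfolding threshold_indices_def inj_def
    by (metis less_asym linorder_neqE_linordered_idom)
  then have le: "lh s \<le> lh t \<longleftrightarrow> lam s \<le> lam t" for s t by (meson not_le)
  have "s = t" if "lh s = lh t" for s t
  proof -
    have "lam s = lam t" using that le[of s t] le[of t s] by linarith
    then show ?thesis using \<open>inj lam\<close> unfolding inj_def by blast
  qed
  then show "inj lh" unfolding inj_def by blast
  have "{s. lh u \<le> lh s} = {s. lam u \<le> lam s}" for u using le by auto
  then show "threshold_indices P r lh lh" using th unfolding threshold_indices_def less by simp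
qed

lemma threshold_pattern_below:
  fixes P :: "bool \<Rightarrow> 's::finite \<Rightarrow> 's \<Rightarrow> real"
  assumes mdp: "is_mdp P" and uc: "unichain P" and "inj lh" and th: "threshold_indices P r lh lh"
    and w: "\<And>s. lh w \<le> lh s" and x: "x < lh w"
  shows "adv_sign_pattern P r lh x UNIV"
proof -
  have "{s. lh w \<le> lh s} = UNIV" using w by auto
  then have "0 \<le> adv P r (lh w) UNIV t" for t
    using th w \<open>inj lh\<close> unfolding threshold_indices_def inj_def
    by (metis order.order_iff_strict order.refl)
  moreover have "adv P r x UNIV t = adv P r (lh w) UNIV t + (lh w - x)" for t
    using adv_UNIV[OF mdp uc, of r x t] adv_UNIV[OF mdp uc, of r "lh w" t] by simp
  ultimately show ?thesis using x w unfolding adv_sign_pattern_def by (smt (verit))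
qed

lemma threshold_pattern_above:
  fixes P :: "bool \<Rightarrow> 's::finite \<Rightarrow> 's \<Rightarrow> real"
  assumes mdp: "is_mdp P" and uc: "unichain P" and "inj lh" and th: "threshold_indices P r lh lh"
    and u: "\<And>s. lh s \<le> lh u" and x: "lh u \<le> x"
  shows "adv_sign_pattern P r lh x {}"
proof -
  have "flip {s. lh u \<le> lh s} u = {}"
    using u \<open>inj lh\<close> unfolding flip_def inj_def by (auto intro: antisym)
  then have flip_u: "adv P r (lh u) {} t = adv P r (lh u) {s. lh u \<le> lh s} t" for t
    using adv_flip_indifferent[OF mdp uc, of r "lh u" "{s. lh u \<le> lh s}" u t] th
    unfolding threshold_indices_def by simp
  have zero: "adv P r (lh u) {} u = 0" using th unfolding flip_u threshold_indices_def by simp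
  have neg: "adv P r (lh u) {} t < 0" if "t \<noteq> u" for t
    using th u[of t] \<open>inj lh\<close> that unfolding flip_u threshold_indices_def inj_def
    by (metis order.order_iff_strict)
  have shift: "adv P r x {} t = adv P r (lh u) {} t - (x - lh u)" for t
    using adv_empty[OF mdp uc, of r x t] adv_empty[OF mdp uc, of r "lh u" t] by simp
  show ?thesis unfolding adv_sign_pattern_def
  proof (intro allI)
    fix t
    have "lh t < lh u" if "t \<noteq> u"
      using u[of t] \<open>inj lh\<close> that unfolding inj_def by (metis order.order_iff_strict)
    then show "(x < lh t \<longrightarrow> 0 < adv P r x {} t) \<and> (lh t < x \<longrightarrow> adv P r x {} t < 0)
        \<and> (lh t = x \<longrightarrow> adv P r x {} t = 0)"
      using zero neg[of t] shift[of t] x by (cases "t = u") auto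
  qed
qed

lemma flip_upper_set:
  fixes lh :: "'s \<Rightarrow> real"
  assumes "inj lh" and "lh u < lh w" and gap: "\<And>s. lh u < lh s \<Longrightarrow> lh w \<le> lh s"
  shows "flip {s. lh u \<le> lh s} u = {s. lh w \<le> lh s}"
proof (rule set_eqI)
  fix s
  have "lh u \<noteq> lh s" if "s \<noteq> u" using \<open>inj lh\<close> that unfolding inj_def by metis
  then show "s \<in> flip {s. lh u \<le> lh s} u \<longleftrightarrow> s \<in> {s. lh w \<le> lh s}"
    using gap[of s] \<open>lh u < lh w\<close> unfolding mem_flip by (cases "s = u") auto
qed

text \<open>Between the indices of two consecutive states u and w, the advantages are affine in the
  penalty, and their signs at both ends are known: at lh w from the threshold conditions of w, at
  lh u from those of u, because flipping the indifferent state u turns the threshold policy of u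
  into that of w.\<close>

lemma threshold_pattern_between:
  fixes P :: "bool \<Rightarrow> 's::finite \<Rightarrow> 's \<Rightarrow> real"
  assumes mdp: "is_mdp P" and uc: "unichain P" and "inj lh" and th: "threshold_indices P r lh lh"
    and uw: "lh u < lh w" and gap: "\<And>s. lh u < lh s \<Longrightarrow> lh w \<le> lh s"
    and x: "lh u \<le> x" "x < lh w"
  shows "adv_sign_pattern P r lh x {s. lh w \<le> lh s}"
  unfolding adv_sign_pattern_def
proof (intro allI)
  fix t
  let ?V = "{s. lh w \<le> lh s}"
  let ?a = "adv P r 0 ?V t" and ?\<sigma> = "adv_slope P r ?V t"
  have aff: "adv P r y ?V t = ?a + y * ?\<sigma>" for y by (rule adv_affine[OF mdp uc])
  have "adv P r (lh u) ?V t = adv P r (lh u) {s. lh u \<le> lh s} t"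
    using adv_flip_indifferent[OF mdp uc, of r "lh u" "{s. lh u \<le> lh s}" u t] th
      flip_upper_set[OF \<open>inj lh\<close> uw gap] unfolding threshold_indices_def by simp
  then have at_u: "?a + lh u * ?\<sigma> = adv P r (lh u) {s. lh u \<le> lh s} t"
    using aff[of "lh u"] by linarith
  have at_w: "?a + lh w * ?\<sigma> = adv P r (lh w) ?V t" using aff[of "lh w"] by linarith
  note zero = threshold_indicesD(2)[OF th] and pos = threshold_indicesD(3)[OF th]
    and neg = threshold_indicesD(4)[OF th]
  consider "lh t < lh u" | "t = u" | "lh u < lh t"
    using \<open>inj lh\<close> unfolding inj_def by (meson linorder_neqE_linordered_idom)
  then show "(x < lh t \<longrightarrow> 0 < adv P r x ?V t) \<and> (lh t < x \<longrightarrow> adv P r x ?V t < 0)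
      \<and> (lh t = x \<longrightarrow> adv P r x ?V t = 0)"
  proof cases
    case 1
    have l: "?a + lh u * ?\<sigma> < 0" using at_u neg[OF 1] by simp
    have r: "?a + lh w * ?\<sigma> \<le> 0" using at_w neg[of t w] 1 uw by simp
    have "?a + x * ?\<sigma> < 0" by (rule affine_neg_between_left[OF l r x])
    then show ?thesis using 1 x aff[of x] by auto
  next
    case 2
    have l: "?a + lh u * ?\<sigma> = 0" using at_u zero[of u] 2 by simp
    have r: "?a + lh w * ?\<sigma> < 0" using at_w neg[of t w] 2 uw by simp
    have "?a + x * ?\<sigma> < 0" if "lh u < x"
      by (rule affine_neg_between_right[OF _ r that]) (use l x in simp_all)
    then show ?thesis using 2 x aff[of x] l by (cases "x = lh u") auto
  next
    case 3
    have l: "0 < ?a + lh u * ?\<sigma>" using at_u pos[OF 3] by simp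
    have "t = w \<or> lh w < lh t" using gap[OF 3] \<open>inj lh\<close> unfolding inj_def by (metis order.order_iff_strict)
    then have r: "0 \<le> ?a + lh w * ?\<sigma>" using at_w pos[of w t] zero[of w] by auto
    have "0 < ?a + x * ?\<sigma>" by (rule affine_pos_between[OF l r x])
    then show ?thesis using gap[OF 3] x aff[of x] by auto
  qed
qed

lemma threshold_indices_sign_pattern:
  fixes P :: "bool \<Rightarrow> 's::finite \<Rightarrow> 's \<Rightarrow> real"
  assumes mdp: "is_mdp P" and uc: "unichain P" and inj: "inj lh" and th: "threshold_indices P r lh lh"
  shows "adv_sign_pattern P r lh x {s. x < lh s}"
proof (cases "\<exists>s. lh s \<le> x")
  case False
  obtain w where "is_arg_min lh (\<lambda>s. s \<in> UNIV) w" using ex_is_arg_min_if_finite[of UNIV lh] by auto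
  then have w: "\<And>s. lh w \<le> lh s" unfolding is_arg_min_linorder by simp
  have "{s. x < lh s} = UNIV" using False by (auto simp: not_le)
  then show ?thesis using threshold_pattern_below[OF mdp uc inj th w] False by (simp add: not_le)
next
  case True
  obtain u where "is_arg_min (\<lambda>s. - lh s) (\<lambda>s. s \<in> {s. lh s \<le> x}) u"
    using ex_is_arg_min_if_finite[of "{s. lh s \<le> x}" "\<lambda>s. - lh s"] True by auto
  then have ux: "lh u \<le> x" and u_max: "\<And>s. lh s \<le> x \<Longrightarrow> lh s \<le> lh u"
    unfolding is_arg_min_linorder by auto
  show ?thesis
  proof (cases "\<exists>s. x < lh s")
    case False
    then have "{s. x < lh s} = {}" and "\<And>s. lh s \<le> lh u" using u_max by (auto simp: not_less)
    then show ?thesis using threshold_pattern_above[OF mdp uc inj th _ ux] by simp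
  next
    case True
    obtain w where "is_arg_min lh (\<lambda>s. s \<in> {s. x < lh s}) w"
      using ex_is_arg_min_if_finite[of "{s. x < lh s}" lh] True by auto
    then have xw: "x < lh w" and w_min: "\<And>s. x < lh s \<Longrightarrow> lh w \<le> lh s"
      unfolding is_arg_min_linorder by auto
    have gap: "lh w \<le> lh s" if "lh u < lh s" for s
      using that u_max[of s] w_min[of s] by (meson not_le order.strict_iff_not)
    have "{s. x < lh s} = {s. lh w \<le> lh s}" using xw w_min by (auto intro: order.strict_trans2)
    then show ?thesis
      using threshold_pattern_between[OF mdp uc inj th _ gap ux xw] ux xw by simp
  qed
qed

lemma threshold_indices_whittle_index:
  fixes P :: "bool \<Rightarrow> 's::finite \<Rightarrow> 's \<Rightarrow> real"
  assumes "is_mdp P" and "unichain P" and "inj lam" and "threshold_indices P r lam lh"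
  shows "is_whittle_index P r t (lh t)"
  by (rule adv_sign_pattern_whittle_index[OF assms(1,2) threshold_indices_sign_pattern[OF assms(1,2)
        threshold_indices_reindex[OF assms(3,4)]]])

lemma whittle_is_whittle_index:
  assumes "indexable P r"
  shows "is_whittle_index P r s (whittle P r s)"
proof -
  obtain l where l: "is_whittle_index P r s l" using assms unfolding indexable_def by blast
  have "l' = l" if "is_whittle_index P r s l'" for l'
  proof (rule ccontr)
    assume "l' \<noteq> l"
    then have "min l l' < (l + l') / 2" "(l + l') / 2 < max l l'" by auto
    then show False using l that unfolding is_whittle_index_def
      by (smt (verit, best))
  qed
  then show ?thesis unfolding whittle_def using l by (metis theI)
qed

lemma eventually_at_left_less_real: "eventually (\<lambda>x. x < c) (at_left (c::real))"
  by (rule eventually_at_leftI[of "c - 1"]) auto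

lemma whittle_threshold_sign_consistent:
  fixes P :: "bool \<Rightarrow> 's::finite \<Rightarrow> 's \<Rightarrow> real"
  assumes mdp: "is_mdp P" and uc: "unichain P" and ix: "indexable P r"
    and regular: "\<And>s. whittle P r s \<noteq> x"
  shows "sign_consistent P r x {s. x < whittle P r s}"
proof -
  obtain \<pi> where sc: "sign_consistent P r x \<pi>" using ex_sign_consistent[OF mdp uc] .
  have "s \<in> \<pi> \<longleftrightarrow> x < whittle P r s" for s
  proof -
    have "opt_adv P r x s = adv P r x \<pi> s" by (rule opt_adv_eq_adv[OF mdp uc sc])
    then show ?thesis
      using whittle_is_whittle_index[OF ix, of s] sc regular[of s]
      unfolding is_whittle_index_def sign_consistent_def
      by (metis linorder_neqE_linordered_idom not_le)
  qed
  then have "\<pi> = {s. x < whittle P r s}" by blast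
  then show ?thesis using sc by simp
qed

lemma eventually_threshold_sign_consistent:
  fixes P :: "bool \<Rightarrow> 's::finite \<Rightarrow> 's \<Rightarrow> real"
  assumes mdp: "is_mdp P" and uc: "unichain P" and ix: "indexable P r"
  shows "eventually (\<lambda>x. sign_consistent P r x {s. c < whittle P r s}) (at_right c)"
    and "eventually (\<lambda>x. sign_consistent P r x {s. c \<le> whittle P r s}) (at_left c)"
proof -
  let ?lam = "whittle P r"
  note regular = whittle_threshold_sign_consistent[OF mdp uc ix]
  have "eventually (\<lambda>x. c < ?lam s \<longrightarrow> x < ?lam s) (at_right c)" for s
    by (cases "c < ?lam s") (auto simp: eventually_at_right_field)
  then have "eventually (\<lambda>x. c < x \<and> (\<forall>s. c < ?lam s \<longrightarrow> x < ?lam s)) (at_right c)"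
    by (intro eventually_conj eventually_at_right_less eventually_all_finite)
  then show "eventually (\<lambda>x. sign_consistent P r x {s. c < ?lam s}) (at_right c)"
  proof (rule eventually_mono)
    fix x assume x: "c < x \<and> (\<forall>s. c < ?lam s \<longrightarrow> x < ?lam s)"
    then have "{s. x < ?lam s} = {s. c < ?lam s}" by auto
    then show "sign_consistent P r x {s. c < ?lam s}" using regular x by (metis less_irrefl order.strict_trans)
  qed
  have "eventually (\<lambda>x. ?lam s < c \<longrightarrow> ?lam s < x) (at_left c)" for s
    by (cases "?lam s < c") (auto simp: eventually_at_left_field)
  moreover have "eventually (\<lambda>x. x < c) (at_left c)" by (rule eventually_at_left_less_real)
  ultimately have "eventually (\<lambda>x. x < c \<and> (\<forall>s. ?lam s < c \<longrightarrow> ?lam s < x)) (at_left c)"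
    by (intro eventually_conj eventually_all_finite) auto
  then show "eventually (\<lambda>x. sign_consistent P r x {s. c \<le> ?lam s}) (at_left c)"
  proof (rule eventually_mono)
    fix x assume x: "x < c \<and> (\<forall>s. ?lam s < c \<longrightarrow> ?lam s < x)"
    then have "{s. x < ?lam s} = {s. c \<le> ?lam s}" by (auto simp: not_le[symmetric])
    then show "sign_consistent P r x {s. c \<le> ?lam s}" using regular x by (metis less_irrefl not_le)
  qed
qed

lemma whittle_threshold_indices:
  fixes P :: "bool \<Rightarrow> 's::finite \<Rightarrow> 's \<Rightarrow> real"
  assumes mdp: "is_mdp P" and uc: "unichain P" and ix: "indexable P r"
  shows "threshold_indices P r (whittle P r) (whittle P r)"
    and "adv_slope P r {s. whittle P r u \<le> whittle P r s} u < 0"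
proof -
  let ?lam = "whittle P r" and ?V = "\<lambda>u. {s. whittle P r u \<le> whittle P r s}"
  have idx: "is_whittle_index P r s (?lam s)" for s by (rule whittle_is_whittle_index[OF ix])
  have "sign_consistent P r c {s. c \<le> ?lam s}" for c
    by (rule sign_consistent_limit[OF mdp uc _ _ eventually_threshold_sign_consistent(2)[OF mdp uc ix]])
       auto
  then have ge: "opt_adv P r (?lam u) t = adv P r (?lam u) (?V u) t" for u t
    by (rule opt_adv_eq_adv[OF mdp uc])
  have "sign_consistent P r c {s. c < ?lam s}" for c
    by (rule sign_consistent_limit[OF mdp uc _ _ eventually_threshold_sign_consistent(1)[OF mdp uc ix]])
       auto
  then have "adv P r (?lam u) (?V u) u = 0" for u
    using \<open>sign_consistent P r (?lam u) (?V u)\<close> opt_adv_eq_adv[OF mdp uc] ge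
    unfolding sign_consistent_def by (metis antisym less_irrefl mem_Collect_eq order_refl)
  then show th: "threshold_indices P r ?lam ?lam"
    using idx ge unfolding threshold_indices_def is_whittle_index_def by metis
  obtain x where "x < ?lam u" and "sign_consistent P r x (?V u)"
    using eventually_happens'[OF _ eventually_conj[OF eventually_threshold_sign_consistent(2)[OF mdp uc ix]
        eventually_at_left_less_real]] by auto
  then have "0 < adv P r 0 (?V u) u + x * adv_slope P r (?V u) u"
    using idx[of u] opt_adv_eq_adv[OF mdp uc] adv_affine[OF mdp uc] unfolding is_whittle_index_def by metis
  moreover have "adv P r 0 (?V u) u + ?lam u * adv_slope P r (?V u) u = 0"
    using th adv_affine[OF mdp uc] unfolding threshold_indices_def by metis
  ultimately have "0 < (x - ?lam u) * adv_slope P r (?V u) u" by (simp add: algebra_simps)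
  then show "adv_slope P r (?V u) u < 0" using \<open>x < ?lam u\<close> by (simp add: zero_less_mult_iff)
qed

definition indifference_point ::
  "(bool \<Rightarrow> 's::finite \<Rightarrow> 's \<Rightarrow> real) \<Rightarrow> (bool \<Rightarrow> 's \<Rightarrow> real) \<Rightarrow> 's set \<Rightarrow> 's \<Rightarrow> real" where
  "indifference_point P r \<pi> u = - adv P r 0 \<pi> u / adv_slope P r \<pi> u"

lemma adv_indifference_point:
  assumes "is_mdp P" and "unichain P" and "adv_slope P r \<pi> u \<noteq> 0"
  shows "adv P r (indifference_point P r \<pi> u) \<pi> u = 0"
proof -
  have "adv P r (indifference_point P r \<pi> u) \<pi> u
      = adv P r 0 \<pi> u + indifference_point P r \<pi> u * adv_slope P r \<pi> u"
    by (rule adv_affine[OF assms(1,2)])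
  then show ?thesis using assms(3) unfolding indifference_point_def by simp
qed

lemma indifference_point_eqI:
  assumes "is_mdp P" and "unichain P" and "adv_slope P r \<pi> u \<noteq> 0" and "adv P r l \<pi> u = 0"
  shows "indifference_point P r \<pi> u = l"
  using adv_affine[OF assms(1,2), of r l \<pi> u] assms(3,4) unfolding indifference_point_def
  by (simp add: field_simps)

lemma eventually_mdp_unichain:
  "unichain P \<Longrightarrow> eventually (\<lambda>Ph. is_mdp Ph \<and> unichain Ph) (support_nhds P)"
  unfolding eventually_support_nhds using same_support_unichain by (metis zero_less_one)

lemma tendsto_adv_slope:
  "is_mdp P \<Longrightarrow> unichain P \<Longrightarrow>
    ((\<lambda>Ph. adv_slope Ph r \<pi> s) \<longlongrightarrow> adv_slope P r \<pi> s) (support_nhds P)"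
  unfolding adv_slope_def by (intro tendsto_diff tendsto_adv_support_nhds)

lemma tendsto_indifference_point:
  fixes P :: "bool \<Rightarrow> 's::finite \<Rightarrow> 's \<Rightarrow> real"
  assumes mdp: "is_mdp P" and uc: "unichain P" and slope: "adv_slope P r \<pi> u \<noteq> 0"
  shows "((\<lambda>Ph. indifference_point Ph r \<pi> u) \<longlongrightarrow> indifference_point P r \<pi> u) (support_nhds P)"
    and "((\<lambda>Ph. adv Ph r (indifference_point Ph r \<pi> u) \<pi> t)
          \<longlongrightarrow> adv P r (indifference_point P r \<pi> u) \<pi> t) (support_nhds P)"
proof -
  note slope_lim = tendsto_adv_slope[OF mdp uc]
  show ip: "((\<lambda>Ph. indifference_point Ph r \<pi> u) \<longlongrightarrow> indifference_point P r \<pi> u) (support_nhds P)"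
    unfolding indifference_point_def
    by (intro tendsto_divide tendsto_minus tendsto_adv_support_nhds[OF mdp uc] slope_lim slope)
  have "((\<lambda>Ph. adv Ph r 0 \<pi> t + indifference_point Ph r \<pi> u * adv_slope Ph r \<pi> t)
      \<longlongrightarrow> adv P r 0 \<pi> t + indifference_point P r \<pi> u * adv_slope P r \<pi> t) (support_nhds P)"
    by (intro tendsto_add tendsto_mult tendsto_adv_support_nhds[OF mdp uc] ip slope_lim)
  moreover have "eventually (\<lambda>Ph. adv Ph r 0 \<pi> t + indifference_point Ph r \<pi> u * adv_slope Ph r \<pi> t
      = adv Ph r (indifference_point Ph r \<pi> u) \<pi> t) (support_nhds P)"
    using eventually_mdp_unichain[OF uc]
    by eventually_elim (use adv_affine in \<open>metis\<close>)
  ultimately show "((\<lambda>Ph. adv Ph r (indifference_point Ph r \<pi> u) \<pi> t)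
      \<longlongrightarrow> adv P r (indifference_point P r \<pi> u) \<pi> t) (support_nhds P)"
    unfolding adv_affine[OF mdp uc, of r "indifference_point P r \<pi> u"] by (rule Lim_transform_eventually)
qed

lemma eventually_all_finite_imp:
  fixes C :: "'a::finite \<Rightarrow> 'b::finite \<Rightarrow> bool"
  assumes "\<And>u t. C u t \<Longrightarrow> eventually (\<lambda>x. Q x u t) F"
  shows "eventually (\<lambda>x. \<forall>u t. C u t \<longrightarrow> Q x u t) F"
proof (intro eventually_all_finite)
  fix u t
  show "eventually (\<lambda>x. C u t \<longrightarrow> Q x u t) F" using assms[of u t] by (cases "C u t") simp_all
qed

text \<open>Threshold indices persist under small perturbations: all conditions but the indifference of u
  are strict inequalities between quantities continuous in the MDP, and indifference holds by
  construction of the indifference points.\<close>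

lemma threshold_indices_eventually:
  fixes P :: "bool \<Rightarrow> 's::finite \<Rightarrow> 's \<Rightarrow> real"
  assumes mdp: "is_mdp P" and uc: "unichain P" and th: "threshold_indices P r lam lh"
    and slope: "\<And>u. adv_slope P r {s. lam u \<le> lam s} u \<noteq> 0"
  shows "eventually (\<lambda>Ph. threshold_indices Ph r lam (\<lambda>u. indifference_point Ph r {s. lam u \<le> lam s} u))
    (support_nhds P)"
proof -
  let ?ip = "\<lambda>Ph u. indifference_point Ph r {s. lam u \<le> lam s} u"
  have ip: "?ip P u = lh u" for u
    using th by (intro indifference_point_eqI[OF mdp uc slope]) (simp add: threshold_indices_def)
  note ip_lim = tendsto_indifference_point[OF mdp uc slope, unfolded ip]
  have "eventually (\<lambda>Ph. \<forall>u t. lam u < lam t \<longrightarrow> ?ip Ph u < ?ip Ph t) (support_nhds P)"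
  proof (rule eventually_all_finite_imp)
    fix u t assume "lam u < lam t"
    then have "0 < lh t - lh u" using th unfolding threshold_indices_def by simp
    with tendsto_diff[OF ip_lim(1)[of t] ip_lim(1)[of u]]
    have "eventually (\<lambda>Ph. 0 < ?ip Ph t - ?ip Ph u) (support_nhds P)" by (rule order_tendstoD(1))
    then show "eventually (\<lambda>Ph. ?ip Ph u < ?ip Ph t) (support_nhds P)" by eventually_elim simp
  qed
  moreover have "eventually (\<lambda>Ph. \<forall>u. adv Ph r (?ip Ph u) {s. lam u \<le> lam s} u = 0) (support_nhds P)"
  proof (rule eventually_all_finite)
    fix u
    have "eventually (\<lambda>Ph. adv_slope Ph r {s. lam u \<le> lam s} u \<noteq> 0) (support_nhds P)"
      by (rule tendsto_imp_eventually_ne[OF tendsto_adv_slope[OF mdp uc] slope])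
    with eventually_mdp_unichain[OF uc]
    show "eventually (\<lambda>Ph. adv Ph r (?ip Ph u) {s. lam u \<le> lam s} u = 0) (support_nhds P)"
      by eventually_elim (simp add: adv_indifference_point)
  qed
  moreover have "eventually (\<lambda>Ph. \<forall>u t. lam u < lam t \<longrightarrow> 0 < adv Ph r (?ip Ph u) {s. lam u \<le> lam s} t)
      (support_nhds P)"
    by (rule eventually_all_finite_imp, rule order_tendstoD(1)[OF ip_lim(2)]) (use th in \<open>simp add: threshold_indices_def\<close>)
  moreover have "eventually (\<lambda>Ph. \<forall>u t. lam t < lam u \<longrightarrow> adv Ph r (?ip Ph u) {s. lam u \<le> lam s} t < 0)
      (support_nhds P)"
    by (rule eventually_all_finite_imp, rule order_tendstoD(2)[OF ip_lim(2)]) (use th in \<open>simp add: threshold_indices_def\<close>)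
  ultimately show ?thesis unfolding threshold_indices_def by eventually_elim blast
qed

theorem mainTheorem1:
  fixes P :: "bool \<Rightarrow> 's::finite \<Rightarrow> 's \<Rightarrow> real" and r :: "bool \<Rightarrow> 's \<Rightarrow> real"
  assumes "is_mdp P" and "unichain P" and "indexable P r"
    and "\<forall>s t. s \<noteq> t \<longrightarrow> whittle P r s \<noteq> whittle P r t"
  shows "\<exists>\<delta>>0. \<forall>Ph :: bool \<Rightarrow> 's \<Rightarrow> 's \<Rightarrow> real.
           is_mdp Ph \<and> same_support P Ph \<and> mdp_dist P Ph \<le> \<delta> \<longrightarrow> indexable Ph r"
proof -
  let ?lam = "whittle P r"
  have "inj ?lam" using assms(4) unfolding inj_def by blast
  have "eventually (\<lambda>Ph. threshold_indices Ph r ?lam (\<lambda>u. indifference_point Ph r {s. ?lam u \<le> ?lam s} u))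
      (support_nhds P)"
    using whittle_threshold_indices(2)[OF assms(1-3)]
    by (intro threshold_indices_eventually[OF assms(1,2) whittle_threshold_indices(1)[OF assms(1-3)]])
       (simp add: less_imp_neq)
  with eventually_mdp_unichain[OF assms(2)] have "eventually (\<lambda>Ph. indexable Ph r) (support_nhds P)"
    by eventually_elim (meson indexable_def threshold_indices_whittle_index \<open>inj ?lam\<close>)
  then show ?thesis unfolding eventually_support_nhds .
qed

end
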